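(* Let $n\in\mathbb{N}$ be fixed and $p\ge1$. For every $v\in\mathbb{V}_n$, $$\|v-R_hv\|_{L^p(\mathcal{D})}\to0\quad\text{as }h\to0.$$
   Context: Let $d=2$, $\mathcal{D}=(-L,L)^2$, $L>0$. For $m\in\mathbb{N}$ let $J=2^m$, $h=2L/J$, $\mathbf{x}_i=-L+ih$ ($i=0,\dots,J$), with cells $\mathcal{D}_{(i_1,i_2)}=(\mathbf{x}_{i_1-1},\mathbf{x}_{i_1}]\times(\mathbf{x}_{i_2-1},\mathbf{x}_{i_2}]$, $i_1,i_2\in\{1,\dots,J\}$. One-dimensional functions on $[-L,L]$ ($\chi_I$ = indicator of $I$): $\phi_1=\frac32\chi_{[\mathbf{x}_0,\mathbf{x}_1]}-\frac12\chi_{(\mathbf{x}_1,\mathbf{x}_2]}$; $\phi_i=-\frac12\chi_{(\mathbf{x}_{i-2},\mathbf{x}_{i-1}]}+\chi_{(\mathbf{x}_{i-1},\mathbf{x}_i]}-\frac12\chi_{(\mathbf{x}_i,\mathbf{x}_{i+1}]}$ for $i=2,\dots,J-1$; $\phi_J=-\frac12\chi_{(\mathbf{x}_{J-2},\mathbf{x}_{J-1}]}+\frac32\chi_{(\mathbf{x}_{J-1},\mathbf{x}_J]}$; and $\psi_i$ is the solution of $-\psi_i''=\phi_i$ on $(-L,L)$, $\psi_i(\pm L)=0$. Two-dimensional basis: $\boldsymbol\phi_{(i_1,i_2)}(x)=\frac{3}{2h^2}\big(\phi_{i_1}(x_1)\psi_{i_2}(x_2)+\psi_{i_1}(x_1)\phi_{i_2}(x_2)\big)$,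 and $\mathbb{V}_h=\mathrm{span}\{\boldsymbol\phi_{\underline i}:\underline i\in\{1,\dots,J\}^2\}$. With $(-\Delta)^{-1}$ the inverse homogeneous Dirichlet Laplacian on $\mathcal{D}$, define $R_hv=\sum_{\underline i}v_{\underline i}\boldsymbol\phi_{\underline i}$ with $v_{\underline i}=\frac{8}{3h^2}\frac{1}{|\mathcal{D}_{\underline i}|}\int_{\mathcal{D}_{\underline i}}(-\Delta)^{-1}v(y)\,dy$. Let $e_k(x_1,x_2)=\sin\!\big(2\pi k\frac{x_1+L}{2L}\big)\sin\!\big(2\pi k\frac{x_2+L}{2L}\big)$, $k\in\mathbb{N}$, and $\mathbb{V}_n=\mathrm{span}\{e_k:k=0,\dots,n\}$. *)

theory Defs
  imports "HOL-Analysis.Analysis"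
begin

definition meshh :: "real \<Rightarrow> nat \<Rightarrow> real" where
  "meshh L J = 2 * L / real J"

definition node :: "real \<Rightarrow> nat \<Rightarrow> nat \<Rightarrow> real" where
  "node L J i = - L + real i * meshh L J"

definition ind :: "real set \<Rightarrow> real \<Rightarrow> real" where
  "ind I t = (if t \<in> I then 1 else 0)"

definition phi1 :: "real \<Rightarrow> nat \<Rightarrow> nat \<Rightarrow> real \<Rightarrow> real" where
  "phi1 L J i t =
    (if i = 1 then
       3/2 * ind {node L J 0 .. node L J 1} t - 1/2 * ind {node L J 1 <.. node L J 2} t
     else if i = J then
       - 1/2 * ind {node L J (J-2) <.. node L J (J-1)} t + 3/2 * ind {node L J (J-1) <.. node L J J} t
     else
       - 1/2 * ind {node L J (i-2) <.. node L J (i-1)} t + ind {node L J (i-1) <.. node L J i} t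
       - 1/2 * ind {node L J i <.. node L J (i+1)} t)"

text \<open>psi_i: the solution of -psi'' = phi_i on (-L,L), psi(-L) = psi(L) = 0, i.e. the
  C^1 function on [-L,L] with absolutely continuous derivative psi' = c - (integral of phi_i)
  vanishing at the end points (set to 0 outside [-L,L]).\<close>
definition psi1 :: "real \<Rightarrow> nat \<Rightarrow> nat \<Rightarrow> real \<Rightarrow> real" where
  "psi1 L J i = (THE \<psi>. \<psi> (-L) = 0 \<and> \<psi> L = 0 \<and> (\<forall>t. t \<notin> {-L..L} \<longrightarrow> \<psi> t = 0) \<and>
      (\<exists>c. \<forall>t\<in>{-L..L}. (\<psi> has_real_derivative (c - integral {-L..t} (phi1 L J i))) (at t within {-L..L})))"

definition bphi :: "real \<Rightarrow> nat \<Rightarrow> nat \<Rightarrow> nat \<Rightarrow> real \<times> real \<Rightarrow> real" where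
  "bphi L J i1 i2 x = 3 / (2 * (meshh L J)\<^sup>2) *
     (phi1 L J i1 (fst x) * psi1 L J i2 (snd x) + psi1 L J i1 (fst x) * phi1 L J i2 (snd x))"

definition dom2 :: "real \<Rightarrow> (real \<times> real) set" where
  "dom2 L = {-L<..<L} \<times> {-L<..<L}"

definition cell :: "real \<Rightarrow> nat \<Rightarrow> nat \<Rightarrow> nat \<Rightarrow> (real \<times> real) set" where
  "cell L J i1 i2 = {node L J (i1-1) <.. node L J i1} \<times> {node L J (i2-1) <.. node L J i2}"

definition dirichlet_sol :: "real \<Rightarrow> (real \<times> real \<Rightarrow> real) \<Rightarrow> (real \<times> real \<Rightarrow> real) \<Rightarrow> bool" where
  "dirichlet_sol L v u \<longleftrightarrow>
     continuous_on ({-L..L} \<times> {-L..L}) u \<and>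
     (\<forall>x. x \<notin> dom2 L \<longrightarrow> u x = 0) \<and>
     (\<exists>D1 D2 D11 D22. \<forall>x\<in>dom2 L.
        ((\<lambda>t. u (t, snd x)) has_real_derivative D1 x) (at (fst x)) \<and>
        ((\<lambda>s. u (fst x, s)) has_real_derivative D2 x) (at (snd x)) \<and>
        ((\<lambda>t. D1 (t, snd x)) has_real_derivative D11 x) (at (fst x)) \<and>
        ((\<lambda>s. D2 (fst x, s)) has_real_derivative D22 x) (at (snd x)) \<and>
        - (D11 x + D22 x) = v x)"

definition invLap :: "real \<Rightarrow> (real \<times> real \<Rightarrow> real) \<Rightarrow> real \<times> real \<Rightarrow> real" where
  "invLap L v = (THE u. dirichlet_sol L v u)"

definition Rh :: "real \<Rightarrow> nat \<Rightarrow> (real \<times> real \<Rightarrow> real) \<Rightarrow> real \<times> real \<Rightarrow> real" where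
  "Rh L J v x = (\<Sum>i1\<in>{1..J}. \<Sum>i2\<in>{1..J}.
      (8 / (3 * (meshh L J)\<^sup>2) * (1 / measure lborel (cell L J i1 i2)) *
         (LINT y:cell L J i1 i2|lborel. invLap L v y)) * bphi L J i1 i2 x)"

definition ek :: "real \<Rightarrow> nat \<Rightarrow> real \<times> real \<Rightarrow> real" where
  "ek L k x = sin (2 * pi * real k * (fst x + L) / (2 * L)) * sin (2 * pi * real k * (snd x + L) / (2 * L))"

definition Vn :: "real \<Rightarrow> nat \<Rightarrow> (real \<times> real \<Rightarrow> real) set" where
  "Vn L n = {v. \<exists>c. v = (\<lambda>x. \<Sum>k\<le>n. c k * ek L k x)}"

definition Lp_norm :: "real \<Rightarrow> real \<Rightarrow> (real \<times> real \<Rightarrow> real) \<Rightarrow> real" where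
  "Lp_norm L p f = (LINT x:dom2 L|lborel. \<bar>f x\<bar> powr p) powr (1 / p)"

end

theory Submission
  imports Defs "HOL-Real_Asymp.Real_Asymp"
begin

(* Write v = \<Sum> c_k e_k with e_k(x) = s_k(x_1) s_k(x_2), s_k(t) = sin(w_k (t + L)), w_k = pi k / L.
   Each e_k is an eigenfunction of the Dirichlet Laplacian with eigenvalue 2 w_k^2 (uniqueness of the
   classical Dirichlet problem comes from the weak maximum principle), so the cell means of
   (-\<Delta>)^{-1} v are explicit, and R_h e_k separates as (P_k(x_1) S_k(x_2) + S_k(x_1) P_k(x_2)) scaled
   by 2 / (w_k^2 h^4), where P_k = \<Sum> a_i phi_i, S_k = \<Sum> a_i psi_i and a_i are the cell means of s_k.
   On each cell P_k is a discrete second difference of the a_i, so 2 P_k / h^2 = w_k^2 s_k + O(h);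
   S_k solves -S_k'' = P_k with zero boundary values, hence 2 S_k / h^2 = s_k + O(h) uniformly.
   Thus each mode is reproduced by R_h uniformly on the square up to an error vanishing with h,
   which bounds the L^p error. *)

section \<open>The one-dimensional Dirichlet problem\<close>

definition dirichlet_sol_1d :: "real \<Rightarrow> real \<Rightarrow> (real \<Rightarrow> real) \<Rightarrow> (real \<Rightarrow> real) \<Rightarrow> bool" where
  "dirichlet_sol_1d a b f u \<longleftrightarrow> u a = 0 \<and> u b = 0 \<and>
     (\<exists>c. \<forall>t\<in>{a..b}. (u has_real_derivative (c - integral {a..t} f)) (at t within {a..b}))"

lemma dirichlet_sol_1d_unique:
  assumes ab: "a < b" and u: "dirichlet_sol_1d a b f u" and w: "dirichlet_sol_1d a b f w"
    and t: "t \<in> {a..b}"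
  shows "u t = w t"
proof -
  obtain c1 c2 where
    u': "\<And>s. s \<in> {a..b} \<Longrightarrow> (u has_real_derivative (c1 - integral {a..s} f)) (at s within {a..b})" and
    w': "\<And>s. s \<in> {a..b} \<Longrightarrow> (w has_real_derivative (c2 - integral {a..s} f)) (at s within {a..b})"
    using u w unfolding dirichlet_sol_1d_def by metis
  define e where "e s = u s - w s - (c1 - c2) * (s - a)" for s
  have "(e has_real_derivative 0) (at s within {a..b})" if "s \<in> {a..b}" for s
    using u'[OF that] w'[OF that] unfolding e_def by (auto intro!: derivative_eq_intros)
  then obtain k where k: "\<And>s. s \<in> {a..b} \<Longrightarrow> e s = k"
    using has_field_derivative_zero_constant[of "{a..b}" e] by auto
  have "k = 0" using k[of a] u w ab by (simp add: e_def dirichlet_sol_1d_def)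
  moreover have "(c1 - c2) * (b - a) = - k" using k[of b] u w ab by (simp add: e_def dirichlet_sol_1d_def)
  ultimately have "c1 = c2" using ab by simp
  then show ?thesis using k[OF t] \<open>k = 0\<close> by (simp add: e_def)
qed

lemma dirichlet_sol_1d_exists:
  assumes ab: "a < b" and f: "f integrable_on {a..b}"
  shows "\<exists>u. dirichlet_sol_1d a b f u \<and> (\<forall>t. t \<notin> {a..b} \<longrightarrow> u t = 0)"
proof -
  define F where "F t = integral {a..t} f" for t
  have F: "continuous_on {a..b} F" unfolding F_def by (rule indefinite_integral_continuous_1[OF f])
  define c where "c = integral {a..b} F / (b - a)"
  define u where "u t = (if t \<in> {a..b} then integral {a..t} (\<lambda>s. c - F s) else 0)" for t
  have cF: "continuous_on {a..b} (\<lambda>s. c - F s)" by (intro continuous_intros F)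
  have u': "(u has_real_derivative (c - F t)) (at t within {a..b})" if "t \<in> {a..b}" for t
    by (rule has_field_derivative_transform_within[OF integral_has_real_derivative[OF cF that], of 1])
       (use that in \<open>auto simp: u_def\<close>)
  have "u b = 0"
    using ab integral_diff[OF integrable_const_ivl integrable_continuous_interval[OF F], of c]
    by (simp add: u_def c_def)
  moreover have "u a = 0" using ab by (simp add: u_def)
  ultimately have "dirichlet_sol_1d a b f u"
    unfolding dirichlet_sol_1d_def using u'[unfolded F_def] by blast
  then show ?thesis by (auto simp: u_def)
qed

text \<open>The constant of integration is a value of the primitive of \<open>f\<close> (Rolle), so the
  derivative of \<open>u\<close> is at most \<open>2 (b - a) M\<close>.\<close>
lemma dirichlet_sol_1d_bound:
  assumes ab: "a < b" and u: "dirichlet_sol_1d a b f u" and f: "f integrable_on {a..b}"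
    and M: "\<And>s. s \<in> {a<..b} \<Longrightarrow> \<bar>f s\<bar> \<le> M" and t: "t \<in> {a..b}"
  shows "\<bar>u t\<bar> \<le> 2 * (b - a)\<^sup>2 * M"
proof -
  define F where "F s = integral {a..s} f" for s
  obtain c where u': "\<And>s. s \<in> {a..b} \<Longrightarrow> (u has_real_derivative (c - F s)) (at s within {a..b})"
    using u unfolding dirichlet_sol_1d_def F_def by metis
  have M0: "0 \<le> M" using M[of b] ab by force
  have F: "\<bar>F s\<bar> \<le> (b - a) * M" if s: "s \<in> {a..b}" for s
  proof -
    have "(f has_integral F s) {a..s}"
      unfolding F_def using integrable_on_subinterval[OF f] s by auto
    from has_integral_bound_real[OF M0 _ this, of "{a}"]
    have "norm (F s) \<le> M * measure lborel {a..s}" using M s by auto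
    also have "\<dots> \<le> M * (b - a)" using s M0 by (auto intro: mult_left_mono)
    finally show ?thesis by (simp add: mult.commute)
  qed
  have "\<exists>z. a < z \<and> z < b \<and> (\<lambda>h. (c - F z) * h) = (\<lambda>h. 0)"
  proof (rule Rolle_deriv[OF ab])
    show "u a = u b" using u by (simp add: dirichlet_sol_1d_def)
    show "continuous_on {a..b} u" using u' by (rule DERIV_continuous_on)
    show "(u has_derivative (\<lambda>h. (c - F s) * h)) (at s)" if "a < s" "s < b" for s
      using u'[of s] that by (simp add: at_within_Icc_at has_field_derivative_def)
  qed
  then obtain z where z: "a < z" "z < b" "c = F z" by (metis eq_iff_diff_eq_0 mult_cancel_left2)
  have "norm (u t - u a) \<le> 2 * (b - a) * M * norm (t - a)"
  proof (rule field_differentiable_bound[OF convex_real_interval(5) u' _ t])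
    show "norm (c - F s) \<le> 2 * (b - a) * M" if "s \<in> {a..b}" for s
      using F[of s] F[of z] z that by (auto simp: abs_le_iff algebra_simps)
  qed (use ab in auto)
  also have "\<dots> \<le> 2 * (b - a) * M * (b - a)"
    using t ab M0 by (intro mult_left_mono) auto
  finally show ?thesis using u by (simp add: dirichlet_sol_1d_def power2_eq_square mult_ac)
qed

lemma dirichlet_sol_1d_add:
  assumes "dirichlet_sol_1d a b f u" "dirichlet_sol_1d a b g w"
    and "f integrable_on {a..b}" "g integrable_on {a..b}"
  shows "dirichlet_sol_1d a b (\<lambda>t. f t + g t) (\<lambda>t. u t + w t)"
proof -
  obtain c1 c2 where
    u': "\<And>s. s \<in> {a..b} \<Longrightarrow> (u has_real_derivative (c1 - integral {a..s} f)) (at s within {a..b})" and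
    w': "\<And>s. s \<in> {a..b} \<Longrightarrow> (w has_real_derivative (c2 - integral {a..s} g)) (at s within {a..b})"
    using assms(1,2) unfolding dirichlet_sol_1d_def by metis
  have "integral {a..s} (\<lambda>t. f t + g t) = integral {a..s} f + integral {a..s} g" if "s \<in> {a..b}" for s
    using that by (intro integral_add integrable_on_subinterval[OF assms(3)]
        integrable_on_subinterval[OF assms(4)]) auto
  then have "((\<lambda>t. u t + w t) has_real_derivative ((c1 + c2) - integral {a..s} (\<lambda>t. f t + g t)))
      (at s within {a..b})" if "s \<in> {a..b}" for s
    using DERIV_add[OF u'[OF that] w'[OF that]] that by (simp add: algebra_simps)
  then show ?thesis
    using assms(1,2) unfolding dirichlet_sol_1d_def by (intro conjI exI[of _ "c1 + c2"] ballI) auto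
qed

lemma dirichlet_sol_1d_scale:
  assumes "dirichlet_sol_1d a b f u"
  shows "dirichlet_sol_1d a b (\<lambda>t. x * f t) (\<lambda>t. x * u t)"
proof -
  obtain c where
    u': "\<And>s. s \<in> {a..b} \<Longrightarrow> (u has_real_derivative (c - integral {a..s} f)) (at s within {a..b})"
    using assms unfolding dirichlet_sol_1d_def by metis
  have "((\<lambda>t. x * u t) has_real_derivative (x * c - integral {a..s} (\<lambda>t. x * f t))) (at s within {a..b})"
    if "s \<in> {a..b}" for s
    using DERIV_cmult[OF u'[OF that], of x] by (simp add: right_diff_distrib)
  then show ?thesis
    using assms unfolding dirichlet_sol_1d_def by (intro conjI exI[of _ "x * c"] ballI) auto
qed

lemma dirichlet_sol_1d_sum:
  assumes "finite I"
    and "\<And>i. i \<in> I \<Longrightarrow> dirichlet_sol_1d a b (f i) (u i)" "\<And>i. i \<in> I \<Longrightarrow> f i integrable_on {a..b}"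
  shows "dirichlet_sol_1d a b (\<lambda>t. \<Sum>i\<in>I. x i * f i t) (\<lambda>t. \<Sum>i\<in>I. x i * u i t)"
  using assms
proof (induction I rule: finite_induct)
  case empty
  show ?case by (auto simp: dirichlet_sol_1d_def intro!: exI[of _ 0])
next
  case (insert i I)
  have "(\<lambda>t. \<Sum>j\<in>I. x j * f j t) integrable_on {a..b}"
    using insert.prems(2) insert.hyps(1) by (intro integrable_sum integrable_on_mult_right) auto
  then have "dirichlet_sol_1d a b (\<lambda>t. x i * f i t + (\<Sum>j\<in>I. x j * f j t))
      (\<lambda>t. x i * u i t + (\<Sum>j\<in>I. x j * u j t))"
    using insert.prems insert.IH
    by (intro dirichlet_sol_1d_add dirichlet_sol_1d_scale integrable_on_mult_right) auto
  then show ?case using insert.hyps by simp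
qed

lemma bounded_measurable_integrable_on:
  fixes f :: "real \<Rightarrow> real"
  assumes "f \<in> borel_measurable lborel" and "\<And>x. \<bar>f x\<bar> \<le> B"
  shows "f integrable_on {a..b}"
proof -
  have "set_integrable lborel {a..b} f"
    unfolding set_integrable_def
    by (rule integrableI_bounded_set_indicator[where B=B]) (use assms in \<open>auto simp: emeasure_lborel_Icc_eq\<close>)
  then show ?thesis by (rule set_borel_integral_eq_integral(1))
qed

lemma phi1_measurable [measurable]: "phi1 L J i \<in> borel_measurable borel"
proof -
  have ind_eq: "ind I = indicator I" for I by (auto simp: ind_def indicator_def fun_eq_iff)
  show ?thesis unfolding phi1_def[abs_def] ind_eq by measurable
qed

lemma abs_phi1_le: "\<bar>phi1 L J i t\<bar> \<le> 2"
  by (auto simp: phi1_def ind_def)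

lemma phi1_integrable_on: "phi1 L J i integrable_on {a..b}"
  by (rule bounded_measurable_integrable_on[OF _ abs_phi1_le]) simp

lemma psi1_dirichlet:
  assumes L: "L > 0"
  shows "dirichlet_sol_1d (-L) L (phi1 L J i) (psi1 L J i)"
    and "t \<notin> {-L..L} \<Longrightarrow> psi1 L J i t = 0"
proof -
  let ?P = "\<lambda>\<psi>. dirichlet_sol_1d (-L) L (phi1 L J i) \<psi> \<and> (\<forall>t. t \<notin> {-L..L} \<longrightarrow> \<psi> t = 0)"
  have psi1_eq: "psi1 L J i = (THE \<psi>. ?P \<psi>)"
    unfolding psi1_def dirichlet_sol_1d_def by (simp add: conj_commute conj_left_commute)
  have "\<exists>!\<psi>. ?P \<psi>"
  proof (rule ex_ex1I)
    show "\<exists>\<psi>. ?P \<psi>" using dirichlet_sol_1d_exists[OF _ phi1_integrable_on] L by simp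
    show "\<psi> = \<psi>'" if "?P \<psi>" "?P \<psi>'" for \<psi> \<psi>'
      using that dirichlet_sol_1d_unique[of "-L" L] L by (metis neg_less_pos ext)
  qed
  then have "?P (psi1 L J i)" unfolding psi1_eq by (rule theI')
  then show "dirichlet_sol_1d (-L) L (phi1 L J i) (psi1 L J i)" "t \<notin> {-L..L} \<Longrightarrow> psi1 L J i t = 0"
    by auto
qed

lemma abs_psi1_le:
  assumes "L > 0"
  shows "\<bar>psi1 L J i t\<bar> \<le> 16 * L\<^sup>2"
proof (cases "t \<in> {-L..L}")
  case True
  then show ?thesis
    using dirichlet_sol_1d_bound[OF _ psi1_dirichlet(1) phi1_integrable_on abs_phi1_le] assms
    by (simp add: power2_eq_square)
next
  case False
  then show ?thesis using psi1_dirichlet(2)[OF assms] by simp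
qed

lemma psi1_measurable [measurable]:
  assumes "L > 0"
  shows "psi1 L J i \<in> borel_measurable borel"
proof -
  obtain c where "\<And>t. t \<in> {-L..L} \<Longrightarrow>
      (psi1 L J i has_real_derivative (c - integral {-L..t} (phi1 L J i))) (at t within {-L..L})"
    using psi1_dirichlet(1)[OF assms] unfolding dirichlet_sol_1d_def by metis
  then have "continuous_on {-L..L} (psi1 L J i)" by (rule DERIV_continuous_on)
  moreover have "psi1 L J i = (\<lambda>t. indicator {-L..L} t *\<^sub>R psi1 L J i t)"
    using psi1_dirichlet(2)[OF assms] by (auto simp: fun_eq_iff indicator_def)
  ultimately show ?thesis
    by (metis borel_measurable_continuous_on_indicator atLeastAtMost_borel)
qed

section \<open>The grid\<close>

lemma meshh_pos: "L > 0 \<Longrightarrow> J > 0 \<Longrightarrow> meshh L J > 0"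
  by (simp add: meshh_def)

lemma node_diff: "i \<ge> 1 \<Longrightarrow> node L J i - node L J (i - 1) = meshh L J"
  by (simp add: node_def algebra_simps)

lemma node_mono: "L > 0 \<Longrightarrow> J > 0 \<Longrightarrow> i \<le> j \<Longrightarrow> node L J i \<le> node L J j"
  using meshh_pos[of L J] by (simp add: node_def mult_right_mono)

lemma node_0 [simp]: "node L J 0 = -L"
  by (simp add: node_def)

lemma node_last: "J > 0 \<Longrightarrow> node L J J = L"
  by (simp add: node_def meshh_def)

lemma node_cell_exists:
  assumes L: "L > 0" and J: "J > 0" and t: "-L < t" "t \<le> L"
  obtains j where "1 \<le> j" "j \<le> J" "node L J (j - 1) < t" "t \<le> node L J j"
proof -
  define h where "h = meshh L J"
  have h: "h > 0" using meshh_pos[OF L J] by (simp add: h_def)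
  define j where "j = nat \<lceil>(t + L) / h\<rceil>"
  have "(t + L) / h \<le> 2 * L / h" using t h by (intro divide_right_mono) auto
  then have "0 < (t + L) / h" "(t + L) / h \<le> real J"
    using t h J by (auto simp: h_def meshh_def)
  then have j: "1 \<le> j" "j \<le> J" "real j - 1 < (t + L) / h" "(t + L) / h \<le> real j"
    unfolding j_def by linarith+
  then have "node L J (j - 1) < t" "t \<le> node L J j"
    using h by (auto simp: node_def h_def[symmetric] field_simps)
  with j that show ?thesis by blast
qed

lemma node_cell_unique:
  assumes L: "L > 0" and J: "J > 0" and i: "1 \<le> i" and j: "1 \<le> j"
    and ti: "node L J (i - 1) < t" "t \<le> node L J i"
    and tj: "node L J (j - 1) < t" "t \<le> node L J j"
  shows "i = j"
proof -
  have "(real i - 1) * meshh L J < real j * meshh L J" "(real j - 1) * meshh L J < real i * meshh L J"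
    using ti tj i j by (auto simp: node_def algebra_simps)
  then have "real i - 1 < real j" "real j - 1 < real i"
    using meshh_pos[OF L J] by (simp_all add: mult_less_cancel_right_pos)
  then show ?thesis by linarith
qed

text \<open>For \<open>j = 1\<close> the condition \<open>i = j - 1\<close> (natural subtraction) never holds, as \<open>i \<ge> 1\<close>.\<close>
lemma phi1_on_cell:
  assumes L: "L > 0" and J: "2 \<le> J" and j: "1 \<le> j" "j \<le> J"
    and t: "node L J (j - 1) < t" "t \<le> node L J j" and i: "1 \<le> i" "i \<le> J"
  shows "phi1 L J i t = (if i = j then (if j = 1 \<or> j = J then 3/2 else 1) else 0)
      - (if i = j + 1 then 1/2 else 0) - (if i = j - 1 then 1/2 else 0)"
proof -
  have J0: "J > 0" using J by simp
  have cell: "ind {node L J (l - 1)<..node L J l} t = (if l = j then 1 else 0)" if "1 \<le> l" for l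
  proof (cases "node L J (l - 1) < t \<and> t \<le> node L J l")
    case True
    then show ?thesis using node_cell_unique[OF L J0 that j(1) _ _ t] by (simp add: ind_def)
  next
    case False
    then show ?thesis using t by (auto simp: ind_def)
  qed
  have cell_before: "ind {node L J (l - 2)<..node L J (l - 1)} t = (if l = j + 1 then 1 else 0)"
    if "2 \<le> l" for l
  proof -
    have "l - 1 - 1 = l - 2" "(l - 1 = j) = (l = j + 1)" using that by arith+
    then show ?thesis using cell[of "l - 1"] that by simp
  qed
  have cell_after: "ind {node L J l<..node L J (l + 1)} t = (if l + 1 = j then 1 else 0)" for l
    using cell[of "l + 1"] by simp
  have "-L < t" using node_mono[OF L J0, of 0 "j - 1"] t by simp
  then have first: "ind {node L J 0..node L J 1} t = (if j = 1 then 1 else 0)"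
    using cell[of 1] by (simp add: ind_def)
  consider "i = 1" | "i = J" "i \<noteq> 1" | "1 < i" "i < J" using i by linarith
  then show ?thesis
  proof cases
    case 1
    then have "phi1 L J i t = 3/2 * (if j = 1 then 1 else 0) - 1/2 * (if 2 = j then 1 else 0)"
      using first cell[of 2] by (simp add: phi1_def)
    then show ?thesis using 1 J j by auto
  next
    case 2
    then have "phi1 L J i t = - 1/2 * (if J = j + 1 then 1 else 0) + 3/2 * (if J = j then 1 else 0)"
      using cell_before[of J] cell[of J] J by (simp add: phi1_def)
    then show ?thesis using 2 J j by auto
  next
    case 3
    then have "phi1 L J i t = - 1/2 * (if i = j + 1 then 1 else 0) + (if i = j then 1 else 0)
        - 1/2 * (if i + 1 = j then 1 else 0)"
      using cell_before[of i] cell[of i] cell_after[of i] by (simp add: phi1_def)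
    then show ?thesis using 3 j by auto
  qed
qed

lemma sum_phi1_on_cell:
  assumes L: "L > 0" and J: "2 \<le> J" and j: "1 \<le> j" "j \<le> J"
    and t: "node L J (j - 1) < t" "t \<le> node L J j"
    and a0: "a 0 = - a 1" and aJ: "a (J + 1) = - a J"
  shows "(\<Sum>i\<in>{1..J}. a i * phi1 L J i t) = a j - (a (j - 1) + a (j + 1)) / 2"
proof -
  have "(\<Sum>i\<in>{1..J}. a i * phi1 L J i t) = (\<Sum>i\<in>{1..J}.
      (if i = j then (if j = 1 \<or> j = J then 3/2 else 1) * a j else 0)
      - (if i = j + 1 then a (j + 1) / 2 else 0) - (if i = j - 1 then a (j - 1) / 2 else 0))"
    by (intro sum.cong refl) (auto simp: phi1_on_cell[OF L J j t])
  also have "\<dots> = (if j = 1 \<or> j = J then 3/2 else 1) * a j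
      - (if j + 1 \<le> J then a (j + 1) / 2 else 0) - (if 2 \<le> j then a (j - 1) / 2 else 0)"
    using j by (auto simp: sum_subtractf)
  also have "\<dots> = a j - (a (j - 1) + a (j + 1)) / 2"
    using J j a0 aJ by (cases "j = 1"; cases "j = J") (auto simp: field_simps)
  finally show ?thesis .
qed

section \<open>Sine modes\<close>

definition freq :: "real \<Rightarrow> nat \<Rightarrow> real" where
  "freq L k = pi * real k / L"

definition sine_mode :: "real \<Rightarrow> nat \<Rightarrow> real \<Rightarrow> real" where
  "sine_mode L k t = sin (freq L k * (t + L))"

lemma ek_eq_sine_modes: "ek L k x = sine_mode L k (fst x) * sine_mode L k (snd x)"
  by (simp add: ek_def sine_mode_def freq_def mult.assoc)

lemma freq_nonneg: "L > 0 \<Longrightarrow> freq L k \<ge> 0"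
  by (simp add: freq_def)

lemma sine_mode_left [simp]: "sine_mode L k (-L) = 0"
  by (simp add: sine_mode_def)

lemma sine_mode_right: "L > 0 \<Longrightarrow> sine_mode L k L = 0"
proof -
  assume "L > 0"
  then have "freq L k * (L + L) = real (2 * k) * pi" by (simp add: freq_def field_simps)
  then show ?thesis by (simp only: sine_mode_def sin_npi)
qed

lemma abs_sine_mode_le: "\<bar>sine_mode L k t\<bar> \<le> 1"
  by (simp add: sine_mode_def)

lemma continuous_on_sine_mode: "continuous_on S (sine_mode L k)"
  unfolding sine_mode_def[abs_def] by (intro continuous_intros)

lemma sine_mode_measurable [measurable]: "sine_mode L k \<in> borel_measurable borel"
  by (rule borel_measurable_continuous_onI[OF continuous_on_sine_mode])

lemma sine_mode_has_derivative:
  "(sine_mode L k has_real_derivative freq L k * cos (freq L k * (t + L))) (at t)"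
  unfolding sine_mode_def[abs_def] by (auto intro!: derivative_eq_intros)

lemma continuous_on_ek: "continuous_on S (ek L k)"
proof -
  have "continuous_on S (\<lambda>x. sine_mode L k (fst x) * sine_mode L k (snd x))"
    by (intro continuous_intros continuous_on_compose2[OF continuous_on_sine_mode]) auto
  then show ?thesis by (simp add: ek_eq_sine_modes[abs_def])
qed

lemma abs_ek_le: "\<bar>ek L k x\<bar> \<le> 1"
  unfolding ek_eq_sine_modes abs_mult by (intro mult_le_one abs_sine_mode_le) auto

lemma ek_measurable [measurable]: "ek L k \<in> borel_measurable borel"
  by (rule borel_measurable_continuous_onI[OF continuous_on_ek])

lemma sine_mode_dirichlet:
  assumes "L > 0"
  shows "dirichlet_sol_1d (-L) L (\<lambda>t. freq L k ^ 2 * sine_mode L k t) (sine_mode L k)"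
proof -
  define w where "w = freq L k"
  have "integral {-L..t} (\<lambda>s. w ^ 2 * sine_mode L k s)
      = - w * cos (w * (t + L)) - - w * cos (w * (-L + L))" if "t \<in> {-L..L}" for t
  proof (rule integral_unique, rule fundamental_theorem_of_calculus[where f = "\<lambda>s. - w * cos (w * (s + L))"])
    show "((\<lambda>s. - w * cos (w * (s + L))) has_vector_derivative w ^ 2 * sine_mode L k s)
        (at s within {-L..t})" for s
      unfolding has_real_derivative_iff_has_vector_derivative[symmetric]
      by (rule has_field_derivative_at_within)
         (auto intro!: derivative_eq_intros simp: sine_mode_def w_def power2_eq_square)
  qed (use that in auto)
  then have "(sine_mode L k has_real_derivative (w - integral {-L..t} (\<lambda>s. w ^ 2 * sine_mode L k s)))
      (at t within {-L..L})" if "t \<in> {-L..L}" for t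
    using sine_mode_has_derivative[of L k t] that by (simp add: w_def has_field_derivative_at_within)
  then show ?thesis
    unfolding dirichlet_sol_1d_def w_def using sine_mode_left sine_mode_right[OF assms] by blast
qed

lemma interval_integral_sin:
  fixes a b w d :: real
  assumes "a \<le> b"
  shows "(LBINT y:{a<..b}. sin (w * (y + d))) = (cos (w * (a + d)) - cos (w * (b + d))) / w"
proof (cases "w = 0")
  case False
  have "(LBINT y:{a<..b}. sin (w * (y + d))) = (LBINT y=a..b. sin (w * (y + d)))"
    using assms by (simp add: interval_integral_Ioc)
  also have "\<dots> = - cos (w * (b + d)) / w - - cos (w * (a + d)) / w"
  proof (rule interval_integral_FTC_finite)
    show "((\<lambda>y. - cos (w * (y + d)) / w) has_vector_derivative sin (w * (x + d)))
        (at x within {min a b..max a b})" for x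
      unfolding has_real_derivative_iff_has_vector_derivative[symmetric]
      by (rule has_field_derivative_at_within) (use False in \<open>auto intro!: derivative_eq_intros\<close>)
  qed (intro continuous_intros)
  finally show ?thesis by (simp add: diff_divide_distrib)
qed simp

definition cell_mean :: "real \<Rightarrow> nat \<Rightarrow> nat \<Rightarrow> nat \<Rightarrow> real" where
  "cell_mean L J k i = 2 * sin (freq L k * meshh L J / 2) / (freq L k * meshh L J)
     * sin (freq L k * meshh L J * (real i - 1/2))"

lemma cell_integral_sine_mode:
  assumes L: "L > 0" and J: "J > 0" and i: "1 \<le> i"
  shows "(LBINT t:{node L J (i - 1)<..node L J i}. sine_mode L k t) = meshh L J * cell_mean L J k i"
proof -
  define h where "h = meshh L J"
  define w where "w = freq L k"
  have h: "h > 0" using meshh_pos[OF L J] by (simp add: h_def)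
  have "node L J (i - 1) + L = h * (real i - 1)" "node L J i + L = h * real i"
    using i by (simp_all add: node_def h_def algebra_simps)
  moreover have "node L J (i - 1) \<le> node L J i" using node_mono[OF L J] by simp
  ultimately have "(LBINT t:{node L J (i - 1)<..node L J i}. sine_mode L k t)
      = (cos (w * (h * (real i - 1))) - cos (w * (h * real i))) / w"
    unfolding sine_mode_def w_def by (simp add: interval_integral_sin)
  also have "cos (w * (h * (real i - 1))) - cos (w * (h * real i))
      = 2 * sin (w * h * (real i - 1/2)) * sin (w * h / 2)"
    by (simp add: cos_diff_cos algebra_simps add_divide_distrib diff_divide_distrib)
  finally show ?thesis
    using h by (cases "w = 0") (simp_all add: cell_mean_def w_def h_def field_simps)
qed

lemma cell_mean_0: "cell_mean L J k 0 = - cell_mean L J k 1"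
  by (simp add: cell_mean_def)

lemma cell_mean_after_last:
  assumes "L > 0" "J > 0"
  shows "cell_mean L J k (J + 1) = - cell_mean L J k J"
proof -
  define b where "b = freq L k * meshh L J / 2"
  have "freq L k * meshh L J * real J = real (2 * k) * pi"
    using assms by (simp add: freq_def meshh_def field_simps)
  then have "freq L k * meshh L J * (real (J + 1) - 1/2) = b + real (2 * k) * pi"
    and "freq L k * meshh L J * (real J - 1/2) = real (2 * k) * pi - b"
    by (simp_all add: b_def algebra_simps)
  then show ?thesis by (simp add: cell_mean_def sin_add sin_diff)
qed

lemma cell_mean_second_difference:
  assumes "1 \<le> j"
  shows "cell_mean L J k j - (cell_mean L J k (j - 1) + cell_mean L J k (j + 1)) / 2
     = 4 * sin (freq L k * meshh L J / 2) ^ 3 / (freq L k * meshh L J)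
       * sin (freq L k * meshh L J * (real j - 1/2))"
proof -
  define w where "w = freq L k * meshh L J"
  define \<theta> where "\<theta> = w * (real j - 1/2)"
  define K where "K = 2 * sin (w / 2) / w"
  have c: "cell_mean L J k i = K * sin (w * (real i - 1/2))" for i
    by (simp add: cell_mean_def K_def w_def)
  have nb: "w * (real (j - 1) - 1/2) = \<theta> - w" "w * (real (j + 1) - 1/2) = \<theta> + w"
    using assms by (simp_all add: \<theta>_def algebra_simps)
  have "cell_mean L J k j - (cell_mean L J k (j - 1) + cell_mean L J k (j + 1)) / 2
      = K * (sin \<theta> - (sin (\<theta> - w) + sin (\<theta> + w)) / 2)"
    unfolding c nb \<theta>_def[symmetric] by (simp add: algebra_simps)
  also have "sin (\<theta> - w) + sin (\<theta> + w) = 2 * sin \<theta> * (1 - 2 * sin (w / 2) ^ 2)"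
    using cos_double_sin[of "w / 2"] by (simp add: sin_diff sin_add)
  also have "sin \<theta> - 2 * sin \<theta> * (1 - 2 * sin (w / 2) ^ 2) / 2 = 2 * sin (w / 2) ^ 2 * sin \<theta>"
    by (simp add: field_simps)
  also have "K * (2 * sin (w / 2) ^ 2 * sin \<theta>) = 4 * sin (w / 2) ^ 3 / w * sin \<theta>"
    by (simp add: K_def power3_eq_cube power2_eq_square mult_ac)
  finally show ?thesis by (simp add: w_def \<theta>_def)
qed

definition phi_mode :: "real \<Rightarrow> nat \<Rightarrow> nat \<Rightarrow> real \<Rightarrow> real" where
  "phi_mode L J k t = (\<Sum>i\<in>{1..J}. cell_mean L J k i * phi1 L J i t)"

definition psi_mode :: "real \<Rightarrow> nat \<Rightarrow> nat \<Rightarrow> real \<Rightarrow> real" where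
  "psi_mode L J k t = (\<Sum>i\<in>{1..J}. cell_mean L J k i * psi1 L J i t)"

definition lap_err :: "real \<Rightarrow> nat \<Rightarrow> nat \<Rightarrow> real" where
  "lap_err L J k = \<bar>8 * sin (freq L k * meshh L J / 2) ^ 3 / (freq L k * meshh L J ^ 3) - freq L k ^ 2\<bar>
     + freq L k ^ 3 * meshh L J / 2"

lemma phi_mode_on_cell:
  assumes L: "L > 0" and J: "2 \<le> J" and j: "1 \<le> j" "j \<le> J"
    and t: "node L J (j - 1) < t" "t \<le> node L J j"
  shows "2 / meshh L J ^ 2 * phi_mode L J k t
    = 8 * sin (freq L k * meshh L J / 2) ^ 3 / (freq L k * meshh L J ^ 3)
      * sin (freq L k * meshh L J * (real j - 1/2))"
proof -
  have "phi_mode L J k t = cell_mean L J k j - (cell_mean L J k (j - 1) + cell_mean L J k (j + 1)) / 2"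
    unfolding phi_mode_def
    using sum_phi1_on_cell[OF L J j t, of "cell_mean L J k"] cell_mean_0 cell_mean_after_last[OF L] J
    by simp
  then show ?thesis
    unfolding cell_mean_second_difference[OF j(1)] by (simp add: power2_eq_square power3_eq_cube mult_ac)
qed

lemma abs_sin_diff_le: "\<bar>sin x - sin y\<bar> \<le> \<bar>x - y\<bar>" for x y :: real
proof -
  have "\<bar>sin x - sin y\<bar> = 2 * \<bar>sin ((x - y) / 2)\<bar> * \<bar>cos ((x + y) / 2)\<bar>"
    by (simp add: sin_diff_sin abs_mult)
  also have "\<dots> \<le> 2 * \<bar>(x - y) / 2\<bar> * 1"
    by (intro mult_mono abs_sin_x_le_abs_x) auto
  finally show ?thesis by simp
qed

text \<open>On the cell containing \<open>t\<close>, \<open>phi_mode\<close> is a multiple of the sine at the cell midpoint,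
  which lies within \<open>h/2\<close> of \<open>t\<close>.\<close>
lemma phi_mode_approx:
  assumes L: "L > 0" and J: "2 \<le> J" and t: "-L < t" "t \<le> L"
  shows "\<bar>2 / meshh L J ^ 2 * phi_mode L J k t - freq L k ^ 2 * sine_mode L k t\<bar> \<le> lap_err L J k"
proof -
  have J0: "J > 0" using J by simp
  obtain j where j: "1 \<le> j" "j \<le> J" and tj: "node L J (j - 1) < t" "t \<le> node L J j"
    by (rule node_cell_exists[OF L J0 t])
  define h where "h = meshh L J"
  define w where "w = freq L k"
  define Q where "Q = 8 * sin (w * h / 2) ^ 3 / (w * h ^ 3)"
  define \<theta> where "\<theta> = w * h * (real j - 1/2)"
  have w: "w \<ge> 0" using freq_nonneg[OF L] by (simp add: w_def)
  have "(real j - 1) * h < t + L" "t + L \<le> real j * h"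
    using tj j by (auto simp: node_def h_def algebra_simps)
  then have "\<bar>h * (real j - 1/2) - (t + L)\<bar> \<le> h / 2" by (auto simp: algebra_simps abs_if)
  moreover have "\<theta> - w * (t + L) = w * (h * (real j - 1/2) - (t + L))"
    by (simp add: \<theta>_def algebra_simps)
  ultimately have mid: "\<bar>\<theta> - w * (t + L)\<bar> \<le> w * (h / 2)"
    using w by (metis abs_mult abs_of_nonneg mult_left_mono)
  have "\<bar>Q * sin \<theta> - w ^ 2 * sin (w * (t + L))\<bar>
      = \<bar>(Q - w ^ 2) * sin \<theta> + w ^ 2 * (sin \<theta> - sin (w * (t + L)))\<bar>"
    by (simp add: algebra_simps)
  also have "\<dots> \<le> \<bar>Q - w ^ 2\<bar> * \<bar>sin \<theta>\<bar> + w ^ 2 * \<bar>sin \<theta> - sin (w * (t + L))\<bar>"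
    by (rule order_trans[OF abs_triangle_ineq]) (simp add: abs_mult)
  also have "\<dots> \<le> \<bar>Q - w ^ 2\<bar> * 1 + w ^ 2 * (w * (h / 2))"
    by (intro add_mono mult_left_mono order_trans[OF abs_sin_diff_le mid]) auto
  finally show ?thesis
    using phi_mode_on_cell[OF L J j tj, of k]
    by (simp add: lap_err_def sine_mode_def Q_def \<theta>_def h_def w_def power3_eq_cube power2_eq_square algebra_simps)
qed

lemma phi_mode_integrable_on: "phi_mode L J k integrable_on {a..b}"
  unfolding phi_mode_def[abs_def]
  by (intro integrable_sum integrable_on_mult_right phi1_integrable_on) simp

lemma psi_mode_dirichlet:
  assumes "L > 0"
  shows "dirichlet_sol_1d (-L) L (phi_mode L J k) (psi_mode L J k)"
  unfolding phi_mode_def[abs_def] psi_mode_def[abs_def]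
  using assms by (intro dirichlet_sol_1d_sum psi1_dirichlet phi1_integrable_on) auto

text \<open>\<open>2 psi_mode / h\<^sup>2 - sine_mode\<close> solves a Dirichlet problem whose right-hand side is
  bounded by \<open>lap_err\<close>.\<close>
lemma psi_mode_approx:
  assumes L: "L > 0" and J: "2 \<le> J" and t: "t \<in> {-L..L}"
  shows "\<bar>2 / meshh L J ^ 2 * psi_mode L J k t - sine_mode L k t\<bar> \<le> 8 * L\<^sup>2 * lap_err L J k"
proof -
  define a where "a = 2 / meshh L J ^ 2"
  define f where "f s = a * phi_mode L J k s + - 1 * (freq L k ^ 2 * sine_mode L k s)" for s
  have sine_int: "(\<lambda>s. freq L k ^ 2 * sine_mode L k s) integrable_on {-L..L}"
    by (intro integrable_continuous_interval continuous_intros continuous_on_sine_mode)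
  have "dirichlet_sol_1d (-L) L f (\<lambda>s. a * psi_mode L J k s + - 1 * sine_mode L k s)"
    unfolding f_def
    by (intro dirichlet_sol_1d_add dirichlet_sol_1d_scale psi_mode_dirichlet sine_mode_dirichlet
        integrable_on_mult_right phi_mode_integrable_on sine_int L)
  moreover have "f integrable_on {-L..L}"
    unfolding f_def by (intro integrable_add integrable_on_mult_right phi_mode_integrable_on sine_int)
  moreover have "\<bar>f s\<bar> \<le> lap_err L J k" if "s \<in> {-L<..L}" for s
    using phi_mode_approx[OF L J, of s k] that by (simp add: f_def a_def)
  ultimately have "\<bar>a * psi_mode L J k t + - 1 * sine_mode L k t\<bar> \<le> 2 * (L - - L)\<^sup>2 * lap_err L J k"
    using dirichlet_sol_1d_bound[OF _ _ _ _ t] L by auto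
  then show ?thesis by (simp add: a_def power2_eq_square)
qed

section \<open>The Dirichlet problem on the square\<close>

definition has_laplacian ::
    "(real \<times> real \<Rightarrow> real) \<Rightarrow> (real \<times> real \<Rightarrow> real) \<Rightarrow> (real \<times> real) set \<Rightarrow> bool" where
  "has_laplacian u f S \<longleftrightarrow> (\<exists>D1 D2 D11 D22. \<forall>x\<in>S.
     ((\<lambda>t. u (t, snd x)) has_real_derivative D1 x) (at (fst x)) \<and>
     ((\<lambda>s. u (fst x, s)) has_real_derivative D2 x) (at (snd x)) \<and>
     ((\<lambda>t. D1 (t, snd x)) has_real_derivative D11 x) (at (fst x)) \<and>
     ((\<lambda>s. D2 (fst x, s)) has_real_derivative D22 x) (at (snd x)) \<and>
     D11 x + D22 x = f x)"

lemma dirichlet_sol_iff: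
  "dirichlet_sol L v u \<longleftrightarrow> continuous_on ({-L..L} \<times> {-L..L}) u \<and>
     (\<forall>x. x \<notin> dom2 L \<longrightarrow> u x = 0) \<and> has_laplacian u (\<lambda>x. - v x) (dom2 L)"
proof -
  have "(- (a + b) = c) = (a + b = - c)" for a b c :: real by auto
  then show ?thesis unfolding dirichlet_sol_def has_laplacian_def by simp
qed

lemma has_laplacian_subset: "has_laplacian u f T \<Longrightarrow> S \<subseteq> T \<Longrightarrow> has_laplacian u f S"
  unfolding has_laplacian_def by blast

lemma has_laplacian_add:
  assumes "has_laplacian u f S" "has_laplacian w g S"
  shows "has_laplacian (\<lambda>x. u x + w x) (\<lambda>x. f x + g x) S"
proof -
  obtain A1 A2 A11 A22 where A: "\<And>x. x \<in> S \<Longrightarrow>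
     ((\<lambda>t. u (t, snd x)) has_real_derivative A1 x) (at (fst x)) \<and>
     ((\<lambda>s. u (fst x, s)) has_real_derivative A2 x) (at (snd x)) \<and>
     ((\<lambda>t. A1 (t, snd x)) has_real_derivative A11 x) (at (fst x)) \<and>
     ((\<lambda>s. A2 (fst x, s)) has_real_derivative A22 x) (at (snd x)) \<and> A11 x + A22 x = f x"
    using assms(1) unfolding has_laplacian_def by metis
  obtain B1 B2 B11 B22 where B: "\<And>x. x \<in> S \<Longrightarrow>
     ((\<lambda>t. w (t, snd x)) has_real_derivative B1 x) (at (fst x)) \<and>
     ((\<lambda>s. w (fst x, s)) has_real_derivative B2 x) (at (snd x)) \<and>
     ((\<lambda>t. B1 (t, snd x)) has_real_derivative B11 x) (at (fst x)) \<and>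
     ((\<lambda>s. B2 (fst x, s)) has_real_derivative B22 x) (at (snd x)) \<and> B11 x + B22 x = g x"
    using assms(2) unfolding has_laplacian_def by metis
  have sum_derivs: "((\<lambda>t. u (t, snd x) + w (t, snd x)) has_real_derivative A1 x + B1 x) (at (fst x)) \<and>
     ((\<lambda>s. u (fst x, s) + w (fst x, s)) has_real_derivative A2 x + B2 x) (at (snd x)) \<and>
     ((\<lambda>t. A1 (t, snd x) + B1 (t, snd x)) has_real_derivative A11 x + B11 x) (at (fst x)) \<and>
     ((\<lambda>s. A2 (fst x, s) + B2 (fst x, s)) has_real_derivative A22 x + B22 x) (at (snd x)) \<and>
     (A11 x + B11 x) + (A22 x + B22 x) = f x + g x" if "x \<in> S" for x
    using A[OF that] B[OF that] by (auto intro!: DERIV_add)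
  show ?thesis
    unfolding has_laplacian_def
    by (rule exI[of _ "\<lambda>x. A1 x + B1 x"], rule exI[of _ "\<lambda>x. A2 x + B2 x"],
        rule exI[of _ "\<lambda>x. A11 x + B11 x"], rule exI[of _ "\<lambda>x. A22 x + B22 x"], use sum_derivs in blast)
qed

lemma has_laplacian_scale:
  assumes "has_laplacian u f S"
  shows "has_laplacian (\<lambda>x. c * u x) (\<lambda>x. c * f x) S"
proof -
  obtain D1 D2 D11 D22 where D: "\<And>x. x \<in> S \<Longrightarrow>
     ((\<lambda>t. u (t, snd x)) has_real_derivative D1 x) (at (fst x)) \<and>
     ((\<lambda>s. u (fst x, s)) has_real_derivative D2 x) (at (snd x)) \<and>
     ((\<lambda>t. D1 (t, snd x)) has_real_derivative D11 x) (at (fst x)) \<and>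
     ((\<lambda>s. D2 (fst x, s)) has_real_derivative D22 x) (at (snd x)) \<and> D11 x + D22 x = f x"
    using assms unfolding has_laplacian_def by metis
  have scaled_derivs: "((\<lambda>t. c * u (t, snd x)) has_real_derivative c * D1 x) (at (fst x)) \<and>
     ((\<lambda>s. c * u (fst x, s)) has_real_derivative c * D2 x) (at (snd x)) \<and>
     ((\<lambda>t. c * D1 (t, snd x)) has_real_derivative c * D11 x) (at (fst x)) \<and>
     ((\<lambda>s. c * D2 (fst x, s)) has_real_derivative c * D22 x) (at (snd x)) \<and>
     c * D11 x + c * D22 x = c * f x" if "x \<in> S" for x
    using D[OF that] by (auto intro!: DERIV_cmult simp flip: distrib_left)
  show ?thesis
    unfolding has_laplacian_def
    by (rule exI[of _ "\<lambda>x. c * D1 x"], rule exI[of _ "\<lambda>x. c * D2 x"],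
        rule exI[of _ "\<lambda>x. c * D11 x"], rule exI[of _ "\<lambda>x. c * D22 x"], use scaled_derivs in blast)
qed

lemma has_laplacian_diff:
  assumes "has_laplacian u f S" "has_laplacian w g S"
  shows "has_laplacian (\<lambda>x. u x - w x) (\<lambda>x. f x - g x) S"
  using has_laplacian_add[OF assms(1) has_laplacian_scale[OF assms(2), of "-1"]] by simp

lemma has_laplacian_sum:
  assumes "finite I" "\<And>i. i \<in> I \<Longrightarrow> has_laplacian (u i) (f i) S"
  shows "has_laplacian (\<lambda>x. \<Sum>i\<in>I. u i x) (\<lambda>x. \<Sum>i\<in>I. f i x) S"
  using assms
proof (induction I rule: finite_induct)
  case empty
  show ?case unfolding has_laplacian_def by (intro exI[of _ "\<lambda>_. 0"]) simp
next
  case (insert i I)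
  then have "has_laplacian (\<lambda>x. u i x + (\<Sum>j\<in>I. u j x)) (\<lambda>x. f i x + (\<Sum>j\<in>I. f j x)) S"
    by (intro has_laplacian_add) auto
  then show ?case using insert.hyps by simp
qed

lemma has_laplacian_cong:
  assumes S: "open S" and eq: "\<And>x. x \<in> S \<Longrightarrow> u x = w x" "\<And>x. x \<in> S \<Longrightarrow> f x = g x"
    and u: "has_laplacian u f S"
  shows "has_laplacian w g S"
proof -
  obtain D1 D2 D11 D22 where D: "\<And>x. x \<in> S \<Longrightarrow>
     ((\<lambda>t. u (t, snd x)) has_real_derivative D1 x) (at (fst x)) \<and>
     ((\<lambda>s. u (fst x, s)) has_real_derivative D2 x) (at (snd x)) \<and>
     ((\<lambda>t. D1 (t, snd x)) has_real_derivative D11 x) (at (fst x)) \<and>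
     ((\<lambda>s. D2 (fst x, s)) has_real_derivative D22 x) (at (snd x)) \<and> D11 x + D22 x = f x"
    using u unfolding has_laplacian_def by metis
  have "((\<lambda>t. w (t, snd x)) has_real_derivative D1 x) (at (fst x))"
    "((\<lambda>s. w (fst x, s)) has_real_derivative D2 x) (at (snd x))" if x: "x \<in> S" for x
  proof -
    have o1: "open ((\<lambda>t. (t, snd x)) -` S)"
      by (rule continuous_open_vimage[OF S]) (intro continuous_intros)
    have o2: "open ((\<lambda>s. (fst x, s)) -` S)"
      by (rule continuous_open_vimage[OF S]) (intro continuous_intros)
    show "((\<lambda>t. w (t, snd x)) has_real_derivative D1 x) (at (fst x))"
      by (rule has_field_derivative_transform_within_open[where f = "\<lambda>t. u (t, snd x)", OF _ o1])
         (use D[OF x] x eq(1) in auto)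
    show "((\<lambda>s. w (fst x, s)) has_real_derivative D2 x) (at (snd x))"
      by (rule has_field_derivative_transform_within_open[where f = "\<lambda>s. u (fst x, s)", OF _ o2])
         (use D[OF x] x eq(1) in auto)
  qed
  then show ?thesis using D eq(2) unfolding has_laplacian_def by metis
qed
lemma has_laplacian_product:
  assumes f: "\<And>t. (f has_real_derivative f' t) (at t)" "\<And>t. (f' has_real_derivative f'' t) (at t)"
    and g: "\<And>t. (g has_real_derivative g' t) (at t)" "\<And>t. (g' has_real_derivative g'' t) (at t)"
  shows "has_laplacian (\<lambda>x. f (fst x) * g (snd x))
    (\<lambda>x. f'' (fst x) * g (snd x) + f (fst x) * g'' (snd x)) UNIV"
  unfolding has_laplacian_def
  by (rule exI[of _ "\<lambda>x. f' (fst x) * g (snd x)"], rule exI[of _ "\<lambda>x. f (fst x) * g' (snd x)"],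
      rule exI[of _ "\<lambda>x. f'' (fst x) * g (snd x)"], rule exI[of _ "\<lambda>x. f (fst x) * g'' (snd x)"])
     (simp add: DERIV_cmult_right DERIV_cmult f g)

lemma has_laplacian_ek: "has_laplacian (ek L k) (\<lambda>x. - 2 * freq L k ^ 2 * ek L k x) UNIV"
proof -
  define w where "w = freq L k"
  have d1: "(sine_mode L k has_real_derivative w * cos (w * (t + L))) (at t)" for t
    unfolding w_def by (rule sine_mode_has_derivative)
  have d2: "((\<lambda>t. w * cos (w * (t + L))) has_real_derivative - w\<^sup>2 * sine_mode L k t) (at t)" for t
    unfolding sine_mode_def w_def by (auto intro!: derivative_eq_intros simp: power2_eq_square)
  show ?thesis
    by (rule has_laplacian_cong[OF open_UNIV _ _ has_laplacian_product[OF d1 d2 d1 d2]])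
       (simp_all add: ek_eq_sine_modes w_def algebra_simps)
qed

text \<open>\<open>g'\<close> vanishes at the maximum \<open>z\<close>; if \<open>c > 0\<close> it would be positive just right
  of \<open>z\<close>, so \<open>g\<close> would increase there.\<close>
lemma second_deriv_nonpos_at_max:
  fixes g g' :: "real \<Rightarrow> real"
  assumes z: "a < z" "z < b"
    and g: "\<And>t. a < t \<Longrightarrow> t < b \<Longrightarrow> (g has_real_derivative g' t) (at t)"
    and g': "(g' has_real_derivative c) (at z)"
    and max: "\<And>t. a < t \<Longrightarrow> t < b \<Longrightarrow> g t \<le> g z"
  shows "c \<le> 0"
proof (rule ccontr)
  assume "\<not> c \<le> 0"
  then obtain d where d: "d > 0" "\<And>h. h > 0 \<Longrightarrow> h < d \<Longrightarrow> g' z < g' (z + h)"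
    using DERIV_pos_inc_right[OF g'] by force
  have g'z: "g' z = 0"
    by (rule DERIV_local_max[OF g[OF z], of "min (z - a) (b - z)"])
       (use z max in \<open>auto simp: abs_if split: if_splits\<close>)
  obtain h where h: "0 < h" "h < d" "z + h < b"
    using field_lbound_gt_zero[OF d(1), of "b - z"] z by auto
  have "g z < g (z + h)"
  proof (rule DERIV_pos_imp_increasing_open[of z "z + h" g])
    show "\<exists>y. DERIV g x :> y \<and> 0 < y" if "z < x" "x < z + h" for x
      using g[of x] d(2)[of "x - z"] that z h g'z by (intro exI[of _ "g' x"]) auto
    show "continuous_on {z..z + h} g"
      by (rule DERIV_continuous_on[of _ _ g']) (use g z h in \<open>auto intro: has_field_derivative_at_within\<close>)
  qed (use h in simp)
  moreover have "g (z + h) \<le> g z" using max[of "z + h"] z h by simp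
  ultimately show False by simp
qed

lemma has_laplacian_nonpos_at_max:
  assumes S: "open S" and u: "has_laplacian u f S" and z: "z \<in> S" and max: "\<And>y. y \<in> S \<Longrightarrow> u y \<le> u z"
  shows "f z \<le> 0"
proof -
  obtain D1 D2 D11 D22 where D: "\<And>x. x \<in> S \<Longrightarrow>
     ((\<lambda>t. u (t, snd x)) has_real_derivative D1 x) (at (fst x)) \<and>
     ((\<lambda>s. u (fst x, s)) has_real_derivative D2 x) (at (snd x)) \<and>
     ((\<lambda>t. D1 (t, snd x)) has_real_derivative D11 x) (at (fst x)) \<and>
     ((\<lambda>s. D2 (fst x, s)) has_real_derivative D22 x) (at (snd x)) \<and> D11 x + D22 x = f x"
    using u unfolding has_laplacian_def by metis
  obtain r where r: "r > 0" "ball z r \<subseteq> S" using S z open_contains_ball by blast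
  obtain z1 z2 where z12: "z = (z1, z2)" by fastforce
  have in1: "(t, z2) \<in> S" if "z1 - r < t" "t < z1 + r" for t
    using that r by (auto simp: z12 dist_Pair_Pair dist_real_def)
  have in2: "(z1, s) \<in> S" if "z2 - r < s" "s < z2 + r" for s
    using that r by (auto simp: z12 dist_Pair_Pair dist_real_def)
  have "D11 z \<le> 0"
  proof (rule second_deriv_nonpos_at_max[of "z1 - r" z1 "z1 + r" "\<lambda>t. u (t, z2)" "\<lambda>t. D1 (t, z2)"])
    show "((\<lambda>t. u (t, z2)) has_real_derivative D1 (t, z2)) (at t)"
      and "u (t, z2) \<le> u (z1, z2)" if "z1 - r < t" "t < z1 + r" for t
      using D[OF in1[OF that]] max[OF in1[OF that]] by (simp_all add: z12)
    show "((\<lambda>t. D1 (t, z2)) has_real_derivative D11 z) (at z1)" using D[OF z] by (simp add: z12)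
  qed (use r in auto)
  moreover have "D22 z \<le> 0"
  proof (rule second_deriv_nonpos_at_max[of "z2 - r" z2 "z2 + r" "\<lambda>s. u (z1, s)" "\<lambda>s. D2 (z1, s)"])
    show "((\<lambda>s. u (z1, s)) has_real_derivative D2 (z1, s)) (at s)"
      and "u (z1, s) \<le> u (z1, z2)" if "z2 - r < s" "s < z2 + r" for s
      using D[OF in2[OF that]] max[OF in2[OF that]] by (simp_all add: z12)
    show "((\<lambda>s. D2 (z1, s)) has_real_derivative D22 z) (at z2)" using D[OF z] by (simp add: z12)
  qed (use r in auto)
  ultimately show ?thesis using D[OF z] by simp
qed

text \<open>The perturbation \<open>d + \<epsilon> x\<^sub>1\<^sup>2\<close> is strictly subharmonic, so it has no interior maximum.\<close>
lemma weak_maximum_principle: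
  assumes L: "L > 0" and cont: "continuous_on ({-L..L} \<times> {-L..L}) d"
    and out: "\<And>x. x \<notin> dom2 L \<Longrightarrow> d x = 0" and lap: "has_laplacian d (\<lambda>_. 0) (dom2 L)"
  shows "d x0 \<le> 0"
proof (rule ccontr)
  assume "\<not> d x0 \<le> 0"
  define \<epsilon> where "\<epsilon> = d x0 / (2 * L\<^sup>2)"
  have \<epsilon>: "\<epsilon> > 0" "\<epsilon> * L\<^sup>2 < d x0" using \<open>\<not> d x0 \<le> 0\<close> L by (simp_all add: \<epsilon>_def)
  define e where "e x = d x + \<epsilon> * (fst x)\<^sup>2" for x
  define K where "K = {-L..L} \<times> {-L..L}"
  have dom2_K: "dom2 L \<subseteq> K" by (auto simp: dom2_def K_def)
  have x0: "x0 \<in> dom2 L" using out \<open>\<not> d x0 \<le> 0\<close> by (metis order_refl)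
  have "continuous_on K e" unfolding e_def K_def by (intro continuous_intros cont)
  moreover have "compact K" "K \<noteq> {}" using x0 dom2_K by (auto simp: K_def intro: compact_Times)
  ultimately obtain z where z: "z \<in> K" "\<And>y. y \<in> K \<Longrightarrow> e y \<le> e z"
    using continuous_attains_sup[of K e] by blast
  have z_dom2: "z \<in> dom2 L"
  proof (rule ccontr)
    assume "z \<notin> dom2 L"
    then have "e z = \<epsilon> * (fst z)\<^sup>2" by (simp add: e_def out)
    also have "\<dots> \<le> \<epsilon> * L\<^sup>2"
      using z(1) \<epsilon> by (intro mult_left_mono) (auto simp: K_def abs_le_square_iff[symmetric])
    also have "\<dots> < e x0"
    proof -
      have "0 \<le> \<epsilon> * (fst x0)\<^sup>2" using \<epsilon> by simp
      then show ?thesis using \<epsilon> unfolding e_def by linarith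
    qed
    finally show False using z(2)[of x0] x0 dom2_K by auto
  qed
  have sq: "((\<lambda>t. t\<^sup>2) has_real_derivative 2 * t) (at t)" "((\<lambda>t. 2 * t) has_real_derivative 2) (at t)"
    for t :: real by (auto intro!: derivative_eq_intros)
  have "has_laplacian (\<lambda>x. (fst x)\<^sup>2 * 1) (\<lambda>x. 2 * 1 + (fst x)\<^sup>2 * 0) UNIV"
    by (rule has_laplacian_product[OF sq, where g' = "\<lambda>_. 0"]) auto
  then have "has_laplacian (\<lambda>x. (fst x)\<^sup>2) (\<lambda>_. 2) UNIV" by simp
  then have lap_e: "has_laplacian e (\<lambda>_. 0 + \<epsilon> * 2) (dom2 L)"
    unfolding e_def by (rule has_laplacian_add[OF lap has_laplacian_subset[OF has_laplacian_scale]]) simp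
  have "(\<lambda>_. 0 + \<epsilon> * 2) z \<le> 0"
    by (rule has_laplacian_nonpos_at_max[OF _ lap_e z_dom2]) (use z dom2_K in \<open>auto simp: dom2_def open_Times\<close>)
  then show False using \<epsilon> by simp
qed

lemma dirichlet_sol_unique:
  assumes L: "L > 0" and u: "dirichlet_sol L v u" and w: "dirichlet_sol L v w"
  shows "u = w"
proof -
  have le: "u x \<le> w x" if "dirichlet_sol L v u" "dirichlet_sol L v w" for u w x
  proof -
    have "u x - w x \<le> 0"
      using that unfolding dirichlet_sol_iff
      by (intro weak_maximum_principle[OF L, of "\<lambda>x. u x - w x"])
         (auto intro: continuous_on_diff dest: has_laplacian_diff)
    then show ?thesis by simp
  qed
  show ?thesis using le[OF u w] le[OF w u] by (intro ext antisym)
qed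

lemma invLap_eqI: "L > 0 \<Longrightarrow> dirichlet_sol L v u \<Longrightarrow> invLap L v = u"
  unfolding invLap_def by (rule the_equality) (auto intro: dirichlet_sol_unique)

lemma ek_vanishes_on_boundary:
  assumes "L > 0" "x \<in> {-L..L} \<times> {-L..L}" "x \<notin> dom2 L"
  shows "ek L k x = 0"
proof -
  have "fst x = -L \<or> fst x = L \<or> snd x = -L \<or> snd x = L" using assms(2,3) by (auto simp: dom2_def)
  then show ?thesis using sine_mode_right[OF assms(1)] by (auto simp: ek_eq_sine_modes)
qed

text \<open>The \<open>ek\<close> are eigenfunctions of the Dirichlet Laplacian, with eigenvalue \<open>2 freq\<^sup>2\<close>.\<close>
lemma invLap_Vn:
  assumes L: "L > 0" and x: "x \<in> {-L..L} \<times> {-L..L}"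
  shows "invLap L (\<lambda>x. \<Sum>k\<le>n. c k * ek L k x) x = (\<Sum>k\<le>n. c k / (2 * freq L k ^ 2) * ek L k x)"
proof -
  define F where "F x = (\<Sum>k\<le>n. c k / (2 * freq L k ^ 2) * ek L k x)" for x
  define u where "u x = (if x \<in> dom2 L then F x else 0)" for x
  have F_boundary: "F x = 0" if "x \<in> {-L..L} \<times> {-L..L}" "x \<notin> dom2 L" for x
    using ek_vanishes_on_boundary[OF L that] by (simp add: F_def)
  have lapF: "has_laplacian F (\<lambda>x. \<Sum>k\<le>n. c k / (2 * freq L k ^ 2) * (- 2 * freq L k ^ 2 * ek L k x)) UNIV"
    unfolding F_def by (rule has_laplacian_sum[OF _ has_laplacian_scale[OF has_laplacian_ek]]) simp
  have lap_eq: "(\<Sum>k\<le>n. c k / (2 * freq L k ^ 2) * (- 2 * freq L k ^ 2 * ek L k x))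
      = - (\<Sum>k\<le>n. c k * ek L k x)" for x
    unfolding sum_negf[symmetric] using L by (intro sum.cong refl) (simp add: ek_def freq_def)
  have "has_laplacian u (\<lambda>x. - (\<Sum>k\<le>n. c k * ek L k x)) (dom2 L)"
  proof (rule has_laplacian_cong[OF _ _ _ has_laplacian_subset[OF lapF]])
    show "open (dom2 L)" by (simp add: dom2_def open_Times)
    show "F x = u x" if "x \<in> dom2 L" for x using that by (simp add: u_def)
  qed (simp_all only: lap_eq subset_UNIV)
  moreover have "continuous_on ({-L..L} \<times> {-L..L}) u"
  proof (rule continuous_on_eq)
    show "continuous_on ({-L..L} \<times> {-L..L}) F"
      unfolding F_def by (intro continuous_intros continuous_on_ek)
  qed (use F_boundary in \<open>auto simp: u_def\<close>)
  ultimately have "dirichlet_sol L (\<lambda>x. \<Sum>k\<le>n. c k * ek L k x) u"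
    unfolding dirichlet_sol_iff by (simp add: u_def)
  then show ?thesis using invLap_eqI[OF L] F_boundary x by (simp add: u_def F_def)
qed

section \<open>\<open>Rh\<close> on \<open>Vn\<close>\<close>

lemma set_integral_Times_Ioc:
  fixes f g :: "real \<Rightarrow> real"
  assumes [measurable]: "f \<in> borel_measurable borel" "g \<in> borel_measurable borel"
    and f: "\<And>s. \<bar>f s\<bar> \<le> B" and g: "\<And>s. \<bar>g s\<bar> \<le> C"
  shows "(LINT y:{a<..b} \<times> {c<..d}|lborel. f (fst y) * g (snd y))
    = (LBINT s:{a<..b}. f s) * (LBINT s:{c<..d}. g s)"
proof -
  define F where "F x = indicator {a<..b} x * f x" for x :: real
  define G where "G y = indicator {c<..d} y * g y" for y :: real
  have eq: "indicator ({a<..b} \<times> {c<..d}) y *\<^sub>R (f (fst y) * g (snd y)) = F (fst y) * G (snd y)" for y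
    by (cases y) (simp add: F_def G_def indicator_def)
  have "integrable (lborel \<Otimes>\<^sub>M lborel) (\<lambda>y. indicator ({a<..b} \<times> {c<..d}) y *\<^sub>R (f (fst y) * g (snd y)))"
  proof (rule integrableI_bounded_set_indicator[where B = "B * C"])
    have "emeasure lborel {l<..u} < \<infinity>" for l u :: real
      by (rule emeasure_bounded_finite, rule bounded_subset[OF bounded_closed_interval[of l u]]) auto
    then show "emeasure (lborel \<Otimes>\<^sub>M lborel) ({a<..b} \<times> {c<..d}) < \<infinity>"
      by (simp add: lborel.emeasure_pair_measure_Times ennreal_mult_less_top)
    show "AE y in lborel \<Otimes>\<^sub>M lborel. y \<in> {a<..b} \<times> {c<..d} \<longrightarrow> norm (f (fst y) * g (snd y)) \<le> B * C"
      using f g by (auto simp: abs_mult intro!: mult_mono order_trans[OF abs_ge_zero f])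
  qed simp_all
  then have int: "integrable (lborel \<Otimes>\<^sub>M lborel) (\<lambda>(x, y). F x * G y)"
    using eq by (simp add: case_prod_beta')
  have "(LINT y:{a<..b} \<times> {c<..d}|lborel. f (fst y) * g (snd y)) = (\<integral>y. F (fst y) * G (snd y) \<partial>lborel)"
    unfolding set_lebesgue_integral_def eq ..
  also have "\<dots> = (\<integral>x. (\<integral>y. F x * G y \<partial>lborel) \<partial>lborel)"
    using lborel_pair.integral_fst[OF int] by (simp add: lborel_prod case_prod_beta')
  also have "\<dots> = (LBINT s:{a<..b}. f s) * (LBINT s:{c<..d}. g s)"
    by (simp add: set_lebesgue_integral_def F_def G_def)
  finally show ?thesis .
qed

lemma cell_in_lborel: "cell L J i1 i2 \<in> sets lborel"
proof -
  have "cell L J i1 i2 \<in> sets (lborel \<Otimes>\<^sub>M lborel)" unfolding cell_def by (intro pair_measureI) auto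
  then show ?thesis by (simp only: lborel_prod)
qed

lemma emeasure_cell:
  assumes "L > 0" "J > 0" "1 \<le> i1" "1 \<le> i2"
  shows "emeasure lborel (cell L J i1 i2) = ennreal (meshh L J ^ 2)"
proof -
  have "emeasure lborel (cell L J i1 i2) = ennreal (meshh L J) * ennreal (meshh L J)"
    using assms node_diff[of i1 L J] node_diff[of i2 L J]
      node_mono[OF assms(1,2), of "i1 - 1" i1] node_mono[OF assms(1,2), of "i2 - 1" i2]
    by (simp add: cell_def lborel_prod[symmetric] lborel.emeasure_pair_measure_Times)
  then show ?thesis using meshh_pos[OF assms(1,2)] by (simp add: power2_eq_square ennreal_mult)
qed

lemma cell_subset_square:
  assumes "L > 0" "J > 0" "i1 \<in> {1..J}" "i2 \<in> {1..J}"
  shows "cell L J i1 i2 \<subseteq> {-L..L} \<times> {-L..L}"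
proof -
  have "-L \<le> node L J (i - 1)" "node L J i \<le> L" if "i \<le> J" for i
    using node_mono[OF assms(1,2), of 0 "i - 1"] node_mono[OF assms(1,2), of i J] node_last[OF assms(2)] that
    by auto
  then show ?thesis using assms(3,4) unfolding cell_def by fastforce
qed

lemma cell_integral_ek:
  assumes "L > 0" "J > 0" "1 \<le> i1" "1 \<le> i2"
  shows "(LINT y:cell L J i1 i2|lborel. ek L k y) = meshh L J ^ 2 * cell_mean L J k i1 * cell_mean L J k i2"
  unfolding cell_def ek_eq_sine_modes
  using set_integral_Times_Ioc[OF sine_mode_measurable sine_mode_measurable abs_sine_mode_le abs_sine_mode_le]
    cell_integral_sine_mode[OF assms(1,2,3)] cell_integral_sine_mode[OF assms(1,2,4)]
  by (simp add: power2_eq_square)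

lemma invLap_Vn_cell_mean:
  assumes L: "L > 0" and J: "J > 0" and i: "i1 \<in> {1..J}" "i2 \<in> {1..J}"
  shows "1 / measure lborel (cell L J i1 i2) * (LINT y:cell L J i1 i2|lborel. invLap L (\<lambda>x. \<Sum>k\<le>n. c k * ek L k x) y)
    = (\<Sum>k\<le>n. c k / (2 * freq L k ^ 2) * cell_mean L J k i1 * cell_mean L J k i2)"
proof -
  have ek_int: "set_integrable lborel (cell L J i1 i2) (ek L k)" for k
    unfolding set_integrable_def
  proof (rule integrableI_bounded_set_indicator[OF cell_in_lborel, where B = 1])
    show "ek L k \<in> borel_measurable lborel" by simp
    show "emeasure lborel (cell L J i1 i2) < \<infinity>" using emeasure_cell L J i by auto
  qed (simp_all add: abs_ek_le)
  have "(LINT y:cell L J i1 i2|lborel. invLap L (\<lambda>x. \<Sum>k\<le>n. c k * ek L k x) y)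
      = (LINT y:cell L J i1 i2|lborel. (\<Sum>k\<le>n. c k / (2 * freq L k ^ 2) * ek L k y))"
    using cell_subset_square[OF L J i] invLap_Vn[OF L]
    by (intro set_lebesgue_integral_cong[OF cell_in_lborel]) auto
  also have "\<dots> = (\<Sum>k\<le>n. (LINT y:cell L J i1 i2|lborel. c k / (2 * freq L k ^ 2) * ek L k y))"
    unfolding set_lebesgue_integral_def scaleR_sum_right
    by (rule Bochner_Integration.integral_sum)
       (use set_integrable_mult_right[OF ek_int] in \<open>simp add: set_integrable_def\<close>)
  also have "\<dots> = (\<Sum>k\<le>n. c k / (2 * freq L k ^ 2) * (LINT y:cell L J i1 i2|lborel. ek L k y))"
    by simp
  finally show ?thesis
    using L J i meshh_pos[OF L J]
    by (simp add: cell_integral_ek measure_def emeasure_cell sum_divide_distrib mult.assoc)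
qed

lemma sum_bphi_separable:
  "(\<Sum>i1\<in>{1..J}. \<Sum>i2\<in>{1..J}. (\<Sum>k\<in>K. b k * a k i1 * a k i2) * bphi L J i1 i2 x)
    = (\<Sum>k\<in>K. b k * (3 / (2 * meshh L J ^ 2)) *
        ((\<Sum>i\<in>{1..J}. a k i * phi1 L J i (fst x)) * (\<Sum>i\<in>{1..J}. a k i * psi1 L J i (snd x))
       + (\<Sum>i\<in>{1..J}. a k i * psi1 L J i (fst x)) * (\<Sum>i\<in>{1..J}. a k i * phi1 L J i (snd x))))"
proof -
  define C where "C = 3 / (2 * meshh L J ^ 2)"
  define T where "T k i1 i2 = b k * C * ((a k i1 * phi1 L J i1 (fst x)) * (a k i2 * psi1 L J i2 (snd x))
      + (a k i1 * psi1 L J i1 (fst x)) * (a k i2 * phi1 L J i2 (snd x)))" for k i1 i2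
  have "(\<Sum>k\<in>K. b k * a k i1 * a k i2) * bphi L J i1 i2 x = (\<Sum>k\<in>K. T k i1 i2)" for i1 i2
    unfolding sum_distrib_right by (intro sum.cong refl) (simp add: T_def C_def bphi_def algebra_simps)
  then have "(\<Sum>i1\<in>{1..J}. \<Sum>i2\<in>{1..J}. (\<Sum>k\<in>K. b k * a k i1 * a k i2) * bphi L J i1 i2 x)
      = (\<Sum>i1\<in>{1..J}. \<Sum>i2\<in>{1..J}. \<Sum>k\<in>K. T k i1 i2)"
    by simp
  also have "\<dots> = (\<Sum>k\<in>K. \<Sum>i1\<in>{1..J}. \<Sum>i2\<in>{1..J}. T k i1 i2)"
    by (simp add: sum.swap[of _ K])
  also have "\<dots> = (\<Sum>k\<in>K. b k * C *
        ((\<Sum>i\<in>{1..J}. a k i * phi1 L J i (fst x)) * (\<Sum>i\<in>{1..J}. a k i * psi1 L J i (snd x))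
       + (\<Sum>i\<in>{1..J}. a k i * psi1 L J i (fst x)) * (\<Sum>i\<in>{1..J}. a k i * phi1 L J i (snd x))))"
  proof (intro sum.cong refl)
    fix k
    have "(\<Sum>i1\<in>{1..J}. \<Sum>i2\<in>{1..J}. T k i1 i2) = b k * C * (\<Sum>i1\<in>{1..J}. \<Sum>i2\<in>{1..J}.
        (a k i1 * phi1 L J i1 (fst x)) * (a k i2 * psi1 L J i2 (snd x))
        + (a k i1 * psi1 L J i1 (fst x)) * (a k i2 * phi1 L J i2 (snd x)))"
      by (simp add: T_def sum_distrib_left)
    then show "(\<Sum>i1\<in>{1..J}. \<Sum>i2\<in>{1..J}. T k i1 i2) = b k * C *
        ((\<Sum>i\<in>{1..J}. a k i * phi1 L J i (fst x)) * (\<Sum>i\<in>{1..J}. a k i * psi1 L J i (snd x))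
       + (\<Sum>i\<in>{1..J}. a k i * psi1 L J i (fst x)) * (\<Sum>i\<in>{1..J}. a k i * phi1 L J i (snd x)))"
      by (simp add: sum_product sum.distrib)
  qed
  finally show ?thesis by (simp add: C_def)
qed

lemma Rh_Vn:
  assumes L: "L > 0" and J: "J > 0"
  shows "Rh L J (\<lambda>x. \<Sum>k\<le>n. c k * ek L k x) x = (\<Sum>k\<le>n. c k * (2 / (freq L k ^ 2 * meshh L J ^ 4)) *
      (phi_mode L J k (fst x) * psi_mode L J k (snd x) + psi_mode L J k (fst x) * phi_mode L J k (snd x)))"
proof -
  define h where "h = meshh L J"
  have h: "h > 0" using meshh_pos[OF L J] by (simp add: h_def)
  define b where "b k = 8 / (3 * h\<^sup>2) * (c k / (2 * freq L k ^ 2))" for k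
  have coef: "8 / (3 * h\<^sup>2) * (1 / measure lborel (cell L J i1 i2))
      * (LINT y:cell L J i1 i2|lborel. invLap L (\<lambda>x. \<Sum>k\<le>n. c k * ek L k x) y)
      = (\<Sum>k\<le>n. b k * cell_mean L J k i1 * cell_mean L J k i2)" if "i1 \<in> {1..J}" "i2 \<in> {1..J}" for i1 i2
    unfolding mult.assoc[of "8 / (3 * h\<^sup>2)"] invLap_Vn_cell_mean[OF L J that]
    by (simp add: b_def sum_distrib_left mult.assoc)
  have "Rh L J (\<lambda>x. \<Sum>k\<le>n. c k * ek L k x) x = (\<Sum>i1\<in>{1..J}. \<Sum>i2\<in>{1..J}.
      (\<Sum>k\<le>n. b k * cell_mean L J k i1 * cell_mean L J k i2) * bphi L J i1 i2 x)"
    unfolding Rh_def h_def[symmetric] by (intro sum.cong refl) (simp only: coef)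
  also have "\<dots> = (\<Sum>k\<le>n. b k * (3 / (2 * h ^ 2)) *
      (phi_mode L J k (fst x) * psi_mode L J k (snd x) + psi_mode L J k (fst x) * phi_mode L J k (snd x)))"
    unfolding sum_bphi_separable phi_mode_def psi_mode_def h_def ..
  also have "\<dots> = (\<Sum>k\<le>n. c k * (2 / (freq L k ^ 2 * h ^ 4)) *
      (phi_mode L J k (fst x) * psi_mode L J k (snd x) + psi_mode L J k (fst x) * phi_mode L J k (snd x)))"
    using h by (intro sum.cong refl) (simp add: b_def field_simps power2_eq_square power4_eq_xxxx)
  finally show ?thesis by (simp add: h_def)
qed

section \<open>Convergence\<close>

lemma abs_mult_sub_mult_le:
  fixes a b u v e1 e2 :: real
  assumes "\<bar>a - u\<bar> \<le> e1" "\<bar>b - v\<bar> \<le> e2" "\<bar>u\<bar> \<le> 1" "\<bar>v\<bar> \<le> 1"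
  shows "\<bar>a * b - u * v\<bar> \<le> e1 * (1 + e2) + e2"
proof -
  have b: "\<bar>b\<bar> \<le> 1 + e2" using assms by linarith
  have "\<bar>a * b - u * v\<bar> = \<bar>(a - u) * b + u * (b - v)\<bar>" by (simp add: algebra_simps)
  also have "\<dots> \<le> \<bar>a - u\<bar> * \<bar>b\<bar> + \<bar>u\<bar> * \<bar>b - v\<bar>"
    by (rule order_trans[OF abs_triangle_ineq]) (simp add: abs_mult)
  also have "\<dots> \<le> e1 * (1 + e2) + 1 * e2"
    using assms b by (intro add_mono mult_mono) auto
  finally show ?thesis by simp
qed

definition mode_err :: "real \<Rightarrow> nat \<Rightarrow> nat \<Rightarrow> real" where
  "mode_err L J k = lap_err L J k / freq L k ^ 2 * (1 + 8 * L\<^sup>2 * lap_err L J k) + 8 * L\<^sup>2 * lap_err L J k"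

text \<open>With \<open>P = 2 phi_mode / (freq\<^sup>2 h\<^sup>2)\<close> and \<open>S = 2 psi_mode / h\<^sup>2\<close>, the left-hand side
  is the mean of \<open>P(x\<^sub>1) S(x\<^sub>2)\<close> and \<open>S(x\<^sub>1) P(x\<^sub>2)\<close>, each a product of approximations of the
  two factors of \<open>ek\<close>.\<close>
lemma Rh_mode_error:
  assumes L: "L > 0" and J: "2 \<le> J" and x: "x \<in> dom2 L"
  shows "\<bar>2 / (freq L k ^ 2 * meshh L J ^ 4) *
      (phi_mode L J k (fst x) * psi_mode L J k (snd x) + psi_mode L J k (fst x) * phi_mode L J k (snd x))
      - ek L k x\<bar> \<le> mode_err L J k"
proof (cases "k = 0")
  case True
  then show ?thesis by (simp add: freq_def ek_def mode_err_def lap_err_def)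
next
  case False
  define h where "h = meshh L J"
  define w where "w = freq L k"
  define E where "E = lap_err L J k"
  have h: "h > 0" using meshh_pos[OF L] J by (simp add: h_def)
  have w: "w > 0" using L False by (simp add: w_def freq_def)
  define P where "P t = 2 / (w ^ 2 * h ^ 2) * phi_mode L J k t" for t
  define S where "S t = 2 / h ^ 2 * psi_mode L J k t" for t
  have P: "\<bar>P t - sine_mode L k t\<bar> \<le> E / w ^ 2" if "-L < t" "t \<le> L" for t
  proof -
    have "P t - sine_mode L k t = (2 / h ^ 2 * phi_mode L J k t - w ^ 2 * sine_mode L k t) / w ^ 2"
      using w by (simp add: P_def field_simps)
    then show ?thesis
      using phi_mode_approx[OF L J that, of k] w by (simp add: h_def w_def E_def divide_right_mono)
  qed
  have S: "\<bar>S t - sine_mode L k t\<bar> \<le> 8 * L\<^sup>2 * E" if "-L \<le> t" "t \<le> L" for t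
    using psi_mode_approx[OF L J, of t k] that by (simp add: S_def h_def E_def)
  obtain x1 x2 where x12: "x = (x1, x2)" "-L < x1" "x1 < L" "-L < x2" "x2 < L"
    using x by (cases x) (auto simp: dom2_def)
  have "\<bar>P x1 * S x2 - sine_mode L k x1 * sine_mode L k x2\<bar> \<le> E / w ^ 2 * (1 + 8 * L\<^sup>2 * E) + 8 * L\<^sup>2 * E"
    using x12 by (intro abs_mult_sub_mult_le P S abs_sine_mode_le) auto
  then have e1: "\<bar>P x1 * S x2 - sine_mode L k x1 * sine_mode L k x2\<bar> \<le> mode_err L J k"
    by (simp add: mode_err_def E_def w_def)
  have "\<bar>S x1 * P x2 - sine_mode L k x1 * sine_mode L k x2\<bar> \<le> 8 * L\<^sup>2 * E * (1 + E / w ^ 2) + E / w ^ 2"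
    using x12 by (intro abs_mult_sub_mult_le P S abs_sine_mode_le) auto
  then have e2: "\<bar>S x1 * P x2 - sine_mode L k x1 * sine_mode L k x2\<bar> \<le> mode_err L J k"
    by (simp add: mode_err_def E_def w_def algebra_simps)
  have mean: "2 / (w ^ 2 * h ^ 4) * (phi_mode L J k x1 * psi_mode L J k x2 + psi_mode L J k x1 * phi_mode L J k x2)
      = (P x1 * S x2 + S x1 * P x2) / 2"
    using h w by (simp add: P_def S_def field_simps power2_eq_square power4_eq_xxxx)
  show ?thesis
    unfolding x12(1) fst_conv snd_conv ek_eq_sine_modes h_def[symmetric] w_def[symmetric] mean
    using e1 e2 unfolding abs_le_iff by (auto simp: field_simps)
qed

lemma Rh_Vn_error:
  assumes L: "L > 0" and J: "2 \<le> J" and x: "x \<in> dom2 L"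
  shows "\<bar>(\<Sum>k\<le>n. c k * ek L k x) - Rh L J (\<lambda>x. \<Sum>k\<le>n. c k * ek L k x) x\<bar> \<le> (\<Sum>k\<le>n. \<bar>c k\<bar> * mode_err L J k)"
proof -
  have "(\<Sum>k\<le>n. c k * ek L k x) - Rh L J (\<lambda>x. \<Sum>k\<le>n. c k * ek L k x) x = (\<Sum>k\<le>n. c k * (ek L k x -
      2 / (freq L k ^ 2 * meshh L J ^ 4) * (phi_mode L J k (fst x) * psi_mode L J k (snd x)
        + psi_mode L J k (fst x) * phi_mode L J k (snd x))))"
    using J by (simp add: Rh_Vn[OF L] sum_subtractf algebra_simps)
  also have "\<bar>\<dots>\<bar> \<le> (\<Sum>k\<le>n. \<bar>c k\<bar> * mode_err L J k)"
    using Rh_mode_error[OF L J x] by (intro order_trans[OF sum_abs] sum_mono) (simp add: abs_mult abs_minus_commute mult_left_mono)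
  finally show ?thesis .
qed

lemma meshh_tendsto: "L > 0 \<Longrightarrow> filterlim (\<lambda>m. meshh L (2 ^ m)) (at_right 0) sequentially"
  unfolding meshh_def by real_asymp

lemma lap_err_tendsto:
  assumes "L > 0"
  shows "(\<lambda>m. lap_err L (2 ^ m) k) \<longlonglongrightarrow> 0"
proof (cases "k = 0")
  case True
  then show ?thesis by (simp add: lap_err_def freq_def)
next
  case False
  define w where "w = freq L k"
  have w: "w > 0" using assms False by (simp add: w_def freq_def)
  have Q: "((\<lambda>h. 8 * sin (w * h / 2) ^ 3 / (w * h ^ 3)) \<longlongrightarrow> w ^ 2) (at_right 0)"
    using w by real_asymp (simp add: field_simps power2_eq_square power3_eq_cube)
  have "((\<lambda>h. \<bar>8 * sin (w * h / 2) ^ 3 / (w * h ^ 3) - w ^ 2\<bar> + w ^ 3 * h / 2)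
      \<longlongrightarrow> \<bar>w ^ 2 - w ^ 2\<bar> + w ^ 3 * 0 / 2) (at_right 0)"
    by (intro tendsto_intros Q tendsto_ident_at) auto
  then have "((\<lambda>h. \<bar>8 * sin (w * h / 2) ^ 3 / (w * h ^ 3) - w ^ 2\<bar> + w ^ 3 * h / 2) \<longlongrightarrow> 0) (at_right 0)"
    by simp
  from filterlim_compose[OF this meshh_tendsto[OF assms]] show ?thesis
    by (simp add: lap_err_def w_def)
qed

lemma mode_err_tendsto:
  assumes "L > 0"
  shows "(\<lambda>m. mode_err L (2 ^ m) k) \<longlonglongrightarrow> 0"
proof (cases "k = 0")
  case True
  then show ?thesis by (simp add: mode_err_def lap_err_def freq_def)
next
  case False
  then have "(\<lambda>m. mode_err L (2 ^ m) k) \<longlonglongrightarrow> 0 / freq L k ^ 2 * (1 + 8 * L\<^sup>2 * 0) + 8 * L\<^sup>2 * 0"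
    unfolding mode_err_def using assms
    by (intro tendsto_intros lap_err_tendsto[OF assms]) (simp add: freq_def)
  then show ?thesis by simp
qed

lemma bphi_measurable:
  assumes "L > 0"
  shows "bphi L J i1 i2 \<in> borel_measurable lborel"
proof -
  note [measurable] = psi1_measurable[OF assms]
  have "bphi L J i1 i2 \<in> borel_measurable (lborel \<Otimes>\<^sub>M lborel)"
    unfolding bphi_def[abs_def] by measurable
  then show ?thesis by (simp only: lborel_prod)
qed

lemma abs_bphi_le:
  assumes "L > 0"
  shows "\<bar>bphi L J i1 i2 x\<bar> \<le> 96 * L\<^sup>2 / meshh L J ^ 2"
proof -
  have "\<bar>phi1 L J i (fst x) * psi1 L J i' (snd x)\<bar> \<le> 2 * (16 * L\<^sup>2)"
    "\<bar>psi1 L J i (fst x) * phi1 L J i' (snd x)\<bar> \<le> (16 * L\<^sup>2) * 2" for i i'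
    unfolding abs_mult using abs_phi1_le abs_psi1_le[OF assms] by (intro mult_mono; simp)+
  then have "\<bar>phi1 L J i1 (fst x) * psi1 L J i2 (snd x) + psi1 L J i1 (fst x) * phi1 L J i2 (snd x)\<bar> \<le> 64 * L\<^sup>2"
    by (smt (verit) abs_triangle_ineq)
  then have "\<bar>bphi L J i1 i2 x\<bar> \<le> 3 / (2 * meshh L J ^ 2) * (64 * L\<^sup>2)"
    unfolding bphi_def abs_mult by (intro mult_mono) auto
  then show ?thesis by simp
qed

lemma Rh_bounded:
  assumes "L > 0"
  shows "\<exists>B. \<forall>x. \<bar>Rh L J v x\<bar> \<le> B"
proof -
  define a where "a i1 i2 = 8 / (3 * (meshh L J)\<^sup>2) * (1 / measure lborel (cell L J i1 i2))
      * (LINT y:cell L J i1 i2|lborel. invLap L v y)" for i1 i2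
  have "\<bar>a i1 i2 * bphi L J i1 i2 x\<bar> \<le> \<bar>a i1 i2\<bar> * (96 * L\<^sup>2 / meshh L J ^ 2)" for i1 i2 x
    unfolding abs_mult by (rule mult_left_mono[OF abs_bphi_le[OF assms]]) simp
  then have "\<bar>Rh L J v x\<bar> \<le> (\<Sum>i1\<in>{1..J}. \<Sum>i2\<in>{1..J}. \<bar>a i1 i2\<bar> * (96 * L\<^sup>2 / meshh L J ^ 2))" for x
    unfolding Rh_def a_def[symmetric] by (intro order_trans[OF sum_abs] sum_mono)
  then show ?thesis by blast
qed

lemma Rh_measurable:
  assumes "L > 0"
  shows "Rh L J v \<in> borel_measurable lborel"
  unfolding Rh_def[abs_def]
  by (intro borel_measurable_sum borel_measurable_times borel_measurable_const bphi_measurable[OF assms])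

lemma set_integrable_abs_powr:
  fixes f :: "'a \<Rightarrow> real"
  assumes "A \<in> sets M" "emeasure M A < \<infinity>" "f \<in> borel_measurable M" "\<And>x. x \<in> A \<Longrightarrow> \<bar>f x\<bar> \<le> B" "0 \<le> p"
  shows "set_integrable M A (\<lambda>x. \<bar>f x\<bar> powr p)"
  unfolding set_integrable_def
proof (rule integrableI_bounded_set_indicator[where B = "B powr p"])
  show "AE x in M. x \<in> A \<longrightarrow> norm (\<bar>f x\<bar> powr p) \<le> B powr p"
    using assms(4,5) by (auto intro!: powr_mono2)
qed (use assms(1-3) in measurable)

lemma set_integral_abs_powr_root_le:
  fixes f :: "'a \<Rightarrow> real"
  assumes A: "A \<in> sets M" "emeasure M A < \<infinity>" and f: "f \<in> borel_measurable M"
    and B: "\<And>x. x \<in> A \<Longrightarrow> \<bar>f x\<bar> \<le> B" "0 \<le> B" and p: "0 < p"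
  shows "(LINT x:A|M. \<bar>f x\<bar> powr p) powr (1 / p) \<le> measure M A powr (1 / p) * B"
proof -
  have "set_integrable M A (\<lambda>_. B powr p)"
    unfolding set_integrable_def by (rule integrableI_bounded_set_indicator[OF A(1) _ A(2)]) auto
  then have "(LINT x:A|M. \<bar>f x\<bar> powr p) \<le> (LINT x:A|M. B powr p)"
    using B p by (intro set_integral_mono set_integrable_abs_powr[OF A f B(1)]) (auto intro!: powr_mono2)
  also have "\<dots> = measure M A * B powr p"
    using A by (simp add: set_integral_const)
  finally have "(LINT x:A|M. \<bar>f x\<bar> powr p) powr (1 / p) \<le> (measure M A * B powr p) powr (1 / p)"
    using p by (intro powr_mono2) (auto simp: set_lebesgue_integral_def intro!: Bochner_Integration.integral_nonneg)
  also have "\<dots> = measure M A powr (1 / p) * B"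
    using p B(2) by (simp add: powr_mult powr_powr)
  finally show ?thesis .
qed

lemma dom2_in_lborel: "dom2 L \<in> sets lborel"
  by (simp add: dom2_def open_Times)

lemma emeasure_dom2_finite: "emeasure lborel (dom2 L) < \<infinity>"
  unfolding dom2_def
  by (rule emeasure_bounded_finite, rule bounded_subset[OF bounded_closed_interval[of "(-L, -L)" "(L, L)"]])
     (auto simp: less_eq_prod_def)

lemma Vn_measurable: "v \<in> Vn L n \<Longrightarrow> v \<in> borel_measurable lborel"
  unfolding Vn_def by auto

lemma set_integrable_Rh_error:
  assumes L: "L > 0" and p: "0 \<le> p" and v: "v \<in> Vn L n"
  shows "set_integrable lborel (dom2 L) (\<lambda>x. \<bar>v x - Rh L J v x\<bar> powr p)"
proof -
  obtain c where c: "v = (\<lambda>x. \<Sum>k\<le>n. c k * ek L k x)" using v unfolding Vn_def by blast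
  have "\<bar>v x\<bar> \<le> (\<Sum>k\<le>n. \<bar>c k\<bar>)" for x
    unfolding c by (auto intro!: order_trans[OF sum_abs] sum_mono simp: abs_mult mult_left_le abs_ek_le)
  moreover obtain B where "\<And>x. \<bar>Rh L J v x\<bar> \<le> B" using Rh_bounded[OF L] by blast
  ultimately have "\<bar>v x - Rh L J v x\<bar> \<le> (\<Sum>k\<le>n. \<bar>c k\<bar>) + B" for x
    by (meson abs_triangle_ineq4 add_mono order_trans)
  moreover have "(\<lambda>x. v x - Rh L J v x) \<in> borel_measurable lborel"
    using Vn_measurable[OF v] Rh_measurable[OF L] by measurable
  ultimately show ?thesis
    using p by (intro set_integrable_abs_powr[OF dom2_in_lborel emeasure_dom2_finite]) auto
qed

lemma Lp_norm_Rh_error_le: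
  assumes L: "L > 0" and J: "2 \<le> J" and p: "0 < p" and v: "v = (\<lambda>x. \<Sum>k\<le>n. c k * ek L k x)"
  shows "Lp_norm L p (\<lambda>x. v x - Rh L J v x)
    \<le> measure lborel (dom2 L) powr (1 / p) * (\<Sum>k\<le>n. \<bar>c k\<bar> * mode_err L J k)"
proof -
  have bound: "\<bar>v x - Rh L J v x\<bar> \<le> (\<Sum>k\<le>n. \<bar>c k\<bar> * mode_err L J k)" if "x \<in> dom2 L" for x
    unfolding v by (rule Rh_Vn_error[OF L J that])
  have "(0, 0) \<in> dom2 L" using L by (simp add: dom2_def)
  then have "0 \<le> (\<Sum>k\<le>n. \<bar>c k\<bar> * mode_err L J k)" using bound by (meson abs_ge_zero order_trans)
  moreover have "(\<lambda>x. v x - Rh L J v x) \<in> borel_measurable lborel"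
    using Rh_measurable[OF L] unfolding v by measurable
  ultimately show ?thesis
    unfolding Lp_norm_def using p
    by (intro set_integral_abs_powr_root_le[OF dom2_in_lborel emeasure_dom2_finite _ bound])
qed

lemma sum_mode_err_tendsto:
  assumes "L > 0"
  shows "(\<lambda>m. \<Sum>k\<le>n. \<bar>c k\<bar> * mode_err L (2 ^ m) k) \<longlonglongrightarrow> 0"
proof -
  have "(\<lambda>m. \<Sum>k\<le>n. \<bar>c k\<bar> * mode_err L (2 ^ m) k) \<longlonglongrightarrow> (\<Sum>k\<le>n. \<bar>c k\<bar> * 0)"
    by (intro tendsto_sum tendsto_mult tendsto_const mode_err_tendsto[OF assms])
  moreover have "(\<Sum>k\<le>n. \<bar>c k\<bar> * 0) = (0::real)" by simp
  ultimately show ?thesis by (simp only:)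
qed

theorem lemma5p3:
  fixes L p :: real and n :: nat and v :: "real \<times> real \<Rightarrow> real"
  assumes "L > 0" and "p \<ge> 1" and "v \<in> Vn L n"
  shows "(\<forall>m. set_integrable lborel (dom2 L) (\<lambda>x. \<bar>v x - Rh L (2 ^ m) v x\<bar> powr p)) \<and>
         (\<lambda>m. Lp_norm L p (\<lambda>x. v x - Rh L (2 ^ m) v x)) \<longlonglongrightarrow> 0"
proof
  show "\<forall>m. set_integrable lborel (dom2 L) (\<lambda>x. \<bar>v x - Rh L (2 ^ m) v x\<bar> powr p)"
    using set_integrable_Rh_error assms by simp
  obtain c where v: "v = (\<lambda>x. \<Sum>k\<le>n. c k * ek L k x)" using assms(3) unfolding Vn_def by blast
  show "(\<lambda>m. Lp_norm L p (\<lambda>x. v x - Rh L (2 ^ m) v x)) \<longlonglongrightarrow> 0"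
  proof (rule tendsto_sandwich[OF _ _ tendsto_const tendsto_mult_right_zero[OF sum_mode_err_tendsto[OF assms(1)]]])
    show "\<forall>\<^sub>F m in sequentially. 0 \<le> Lp_norm L p (\<lambda>x. v x - Rh L (2 ^ m) v x)"
      by (simp add: Lp_norm_def)
    have "2 \<le> (2::nat) ^ m" if "m \<ge> 1" for m using that by (simp add: self_le_power)
    then show "\<forall>\<^sub>F m in sequentially. Lp_norm L p (\<lambda>x. v x - Rh L (2 ^ m) v x)
        \<le> measure lborel (dom2 L) powr (1 / p) * (\<Sum>k\<le>n. \<bar>c k\<bar> * mode_err L (2 ^ m) k)"
      using assms(1,2) by (intro eventually_sequentiallyI[of 1] Lp_norm_Rh_error_le[OF _ _ _ v]) auto
  qed
qed

end
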